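(* Let $\varepsilon>0$ and $f_1,f_2$ be real-analytic on $[-\varepsilon,\infty)$ with $f_1(x)>0$, $f_2(x)>0$ for all $x\ge-\varepsilon$. Suppose that $A(f_1)$ is geometrically quasi-periodic (so it extends to a real-analytic function on $\mathbb R$, still denoted $A(f_1)$) and that there is $x_0>0$ with $A(f_2)(x)=A(f_1)(x_0-x)$ for all $x$ (where $A(f_2)$ is likewise understood as the analytic function on $\mathbb R$ given by this relation). Then $f_1$, $f_2$, $A(f_1)$ and $A(f_2)$ are constant.
   Context: For a real-analytic $f$ on $[-\varepsilon,\infty)$, $A(f)(\theta)=\int_0^{\pi/2}f(\theta\sin^2s)\,ds=\int_0^1\frac{f(\theta s^2)}{\sqrt{1-s^2}}ds$ for $\theta\ge-\varepsilon$; $A(f)$ is real-analytic. A map $g:(0,\infty)\to\mathbb R$ is geometrically $\tau$-quasi-periodic ($\tau>0$) if there is $\gamma\neq0$ with $g(x+\tau)=\gamma g(x)$ for all $x>0$; geometrically quasi-periodic means this holds for some $\tau>0$; an analytic such $g$ has an analytic extension to $\mathbb R$ satisfying the same relation. *)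

theory Defs
  imports "HOL-Analysis.Analysis"
begin

definition real_analytic_on :: "(real \<Rightarrow> real) \<Rightarrow> real set \<Rightarrow> bool" where
  "real_analytic_on f S \<longleftrightarrow>
     (\<forall>x\<in>S. \<exists>r>0. \<exists>a::nat \<Rightarrow> real.
        \<forall>y\<in>S. \<bar>y - x\<bar> < r \<longrightarrow> (\<lambda>n. a n * (y - x) ^ n) sums f y)"

definition A_op :: "(real \<Rightarrow> real) \<Rightarrow> real \<Rightarrow> real" where
  "A_op f \<theta> = integral {0..pi/2} (\<lambda>s. f (\<theta> * (sin s)\<^sup>2))"

definition geom_qp_with :: "real \<Rightarrow> (real \<Rightarrow> real) \<Rightarrow> bool" where
  "geom_qp_with \<tau> g \<longleftrightarrow> (\<exists>\<gamma>. \<gamma> \<noteq> 0 \<and> (\<forall>x>0. g (x + \<tau>) = \<gamma> * g x))"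

definition geom_qp :: "(real \<Rightarrow> real) \<Rightarrow> bool" where
  "geom_qp g \<longleftrightarrow> (\<exists>\<tau>>0. geom_qp_with \<tau> g)"

end

theory Submission
  imports Defs "HOL-Library.Periodic_Fun"
begin

text \<open>
  Write \<open>\<Psi>\<^sub>h(X) = \<integral>\<^sub>0\<^sup>\<surd>\<^sup>X h(X - w\<^sup>2) dw\<close> for the Abel transform. The operator \<open>A\<close> intertwines it with
  \<open>f \<mapsto> \<pi>/2 \<cdot> f(z\<^sup>2)\<close>, i.e. \<open>\<Psi>\<^sub>A\<^sub>f(X) = \<pi>/2 \<integral>\<^sub>0\<^sup>\<surd>\<^sup>X f(z\<^sup>2) dz\<close> (Wallis integrals for monomials, then
  Weierstrass approximation); so \<open>\<Psi>\<^sub>A\<^sub>f\<^sub>1\<close> is increasing because \<open>f\<^sub>1 > 0\<close>.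

  Positivity also gives \<open>A f \<ge> m / \<surd>\<theta>\<close> for large \<open>\<theta>\<close>. For the analytic extension \<open>g\<close> of \<open>A f\<^sub>1\<close> this
  bound holds at \<open>+\<infinity>\<close> and, via \<open>A f\<^sub>2(x) = g(x\<^sub>0 - x)\<close>, at \<open>-\<infinity>\<close>; since \<open>g\<close> grows like \<open>\<gamma>\<^sup>x\<^sup>/\<^sup>\<tau>\<close>,
  the quasi-periodicity factor is \<open>\<gamma> = 1\<close> and \<open>g\<close> is periodic.

  A continuous periodic function with increasing Abel transform is constant: subtract the mean;
  the truncated transforms of the remainder \<open>p\<close> converge to a periodic limit which monotonicity
  forces to be constant, and pairing with \<open>cos\<close> and \<open>sin\<close> of each frequency shows that every
  Fourier coefficient of \<open>p\<close>, rotated by a nonzero Fresnel integral, vanishes.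

  Finally \<open>A f\<close> constant forces \<open>f\<close> constant on \<open>(0, \<infinity>)\<close> by differentiating the Abel identity,
  and on \<open>[-\<epsilon>, \<infinity>)\<close> by analyticity.
\<close>

section \<open>Real-analytic functions on sets closed upwards\<close>

text \<open>Closure upwards puts \<open>x + r/2\<close> into \<open>S\<close>, so the local power series has a positive
  radius of convergence.\<close>

lemma real_analytic_on_imp_continuous_on:
  assumes ra: "real_analytic_on f S" and up: "\<And>x y. x \<in> S \<Longrightarrow> x \<le> y \<Longrightarrow> y \<in> S"
  shows "continuous_on S f"
proof (rule continuous_on_eq_continuous_within[THEN iffD2], rule ballI)
  fix x assume x: "x \<in> S"
  obtain r a where r: "r > 0"
    and a: "\<And>y. y \<in> S \<Longrightarrow> \<bar>y - x\<bar> < r \<Longrightarrow> (\<lambda>n. a n * (y - x) ^ n) sums f y"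
    using ra x unfolding real_analytic_on_def by blast
  have "x + r/2 \<in> S" using up[OF x, of "x + r/2"] r by simp
  then have sm: "summable (\<lambda>n. a n * (r/2) ^ n)"
    using a[of "x + r/2"] r by (simp add: sums_summable)
  define g where "g t = (\<Sum>n. a n * t ^ n)" for t :: real
  have "isCont g 0" unfolding g_def by (rule isCont_powser[OF sm]) (use r in simp)
  then have "isCont (\<lambda>y. g (y - x)) x"
    by (intro isCont_o2[where f = "\<lambda>y. y - x" and g = g, unfolded o_def]) (auto intro!: continuous_intros)
  then have "continuous (at x within S) (\<lambda>y. g (y - x))" by (rule continuous_at_imp_continuous_within)
  then show "continuous (at x within S) f"
  proof (rule continuous_transform_within[where \<delta> = "r/2"])
    fix y assume "y \<in> S" "dist y x < r/2"
    then show "g (y - x) = f y" using a r unfolding g_def by (simp add: dist_real_def sums_iff)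
  qed (use r x in auto)
qed

lemma real_analytic_on_const: "real_analytic_on (\<lambda>_. c) S"
proof -
  have "(\<lambda>n. (if n = 0 then c else 0) * t ^ n) = (\<lambda>n. if n = 0 then c else 0)" for t :: real
    by auto
  then have "(\<lambda>n. (if n = 0 then c else 0) * t ^ n) sums c" for t :: real
    using sums_single[of 0 "\<lambda>_. c"] by simp
  then show ?thesis
    unfolding real_analytic_on_def by (intro ballI exI[of _ 1] conjI exI[of _ "\<lambda>n. if n = 0 then c else 0"]) simp_all
qed

lemma real_analytic_on_cmult:
  assumes "real_analytic_on f S"
  shows "real_analytic_on (\<lambda>x. c * f x) S"
  unfolding real_analytic_on_def
proof
  fix x assume "x \<in> S"
  then obtain r a where "r > 0" and a: "\<forall>y\<in>S. \<bar>y - x\<bar> < r \<longrightarrow> (\<lambda>n. a n * (y - x) ^ n) sums f y"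
    using assms unfolding real_analytic_on_def by blast
  have "(\<lambda>n. c * a n * (y - x) ^ n) sums (c * f y)" if "y \<in> S" "\<bar>y - x\<bar> < r" for y
    using sums_mult[OF a[rule_format, OF that], of c] by (simp add: mult.assoc)
  then show "\<exists>r>0. \<exists>b. \<forall>y\<in>S. \<bar>y - x\<bar> < r \<longrightarrow> (\<lambda>n. b n * (y - x) ^ n) sums (c * f y)"
    using \<open>r > 0\<close> by (intro exI[of _ r] conjI exI[of _ "\<lambda>n. c * a n"]) auto
qed

lemma real_analytic_on_diff:
  assumes "real_analytic_on f S" and "real_analytic_on g S"
  shows "real_analytic_on (\<lambda>x. f x - g x) S"
  unfolding real_analytic_on_def
proof
  fix x assume "x \<in> S"
  obtain r1 a1 where "r1 > 0" and a1: "\<forall>y\<in>S. \<bar>y - x\<bar> < r1 \<longrightarrow> (\<lambda>n. a1 n * (y - x) ^ n) sums f y"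
    using assms(1) \<open>x \<in> S\<close> unfolding real_analytic_on_def by blast
  obtain r2 a2 where "r2 > 0" and a2: "\<forall>y\<in>S. \<bar>y - x\<bar> < r2 \<longrightarrow> (\<lambda>n. a2 n * (y - x) ^ n) sums g y"
    using assms(2) \<open>x \<in> S\<close> unfolding real_analytic_on_def by blast
  show "\<exists>r>0. \<exists>b. \<forall>y\<in>S. \<bar>y - x\<bar> < r \<longrightarrow> (\<lambda>n. b n * (y - x) ^ n) sums (f y - g y)"
  proof (intro exI[of _ "min r1 r2"] conjI exI[of _ "\<lambda>n. a1 n - a2 n"] ballI impI)
    fix y assume "y \<in> S" "\<bar>y - x\<bar> < min r1 r2"
    then have "(\<lambda>n. a1 n * (y - x) ^ n) sums f y" "(\<lambda>n. a2 n * (y - x) ^ n) sums g y"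
      using a1 a2 by simp_all
    from sums_diff[OF this] show "(\<lambda>n. (a1 n - a2 n) * (y - x) ^ n) sums (f y - g y)"
      by (simp only: left_diff_distrib)
  qed (use \<open>r1 > 0\<close> \<open>r2 > 0\<close> in simp)
qed

lemma real_analytic_on_shift:
  assumes "real_analytic_on g UNIV"
  shows "real_analytic_on (\<lambda>x. g (x + c)) UNIV"
  unfolding real_analytic_on_def
proof
  fix x :: real
  obtain r a where "r > 0" "\<forall>y. \<bar>y - (x + c)\<bar> < r \<longrightarrow> (\<lambda>n. a n * (y - (x + c)) ^ n) sums g y"
    using assms unfolding real_analytic_on_def by blast
  then show "\<exists>r>0. \<exists>a. \<forall>y\<in>UNIV. \<bar>y - x\<bar> < r \<longrightarrow> (\<lambda>n. a n * (y - x) ^ n) sums g (y + c)"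
    by (intro exI[of _ r] conjI exI[of _ a]) (auto dest: spec[of _ "_ + c"])
qed

lemma powser_sums_0_imp_coeffs_0:
  fixes a :: "nat \<Rightarrow> real"
  assumes r: "r > 0" and zero: "\<And>t. 0 < t \<Longrightarrow> t < r \<Longrightarrow> (\<lambda>n. a n * t ^ n) sums 0"
  shows "a k = 0"
proof (induction k rule: less_induct)
  case (less k)
  define b where "b i = a (i + k)" for i
  have b_sums: "(\<lambda>i. b i * t ^ i) sums 0" if t: "0 < t" "t < r" for t
  proof -
    have "(\<lambda>i. a (i + k) * t ^ (i + k)) sums 0"
      using zero[OF t] sums_iff_shift[of "\<lambda>i. a i * t ^ i" k 0] less by simp
    from sums_mult2[OF this, of "1 / t ^ k"] show ?thesis
      using t unfolding b_def by (simp add: power_add)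
  qed
  define G where "G t = (\<Sum>i. b i * t ^ i)" for t :: real
  have "summable (\<lambda>i. b i * (r/2) ^ i)" using b_sums[of "r/2"] r by (auto intro: sums_summable)
  then have "isCont G 0" unfolding G_def by (rule isCont_powser) (use r in simp)
  then have "(G \<longlongrightarrow> G 0) (at_right 0)" by (simp add: isCont_def filterlim_at_split)
  moreover have "eventually (\<lambda>t. G t = 0) (at_right 0)"
    using eventually_at_right_real[OF r] by eventually_elim (use b_sums in \<open>auto simp: G_def sums_iff\<close>)
  ultimately have "G 0 = 0" by (metis tendsto_unique trivial_limit_at_right_real tendsto_eventually)
  then show ?case unfolding G_def b_def by simp
qed

lemma real_analytic_on_eq_0_near:
  assumes ra: "real_analytic_on \<phi> S" and up: "\<And>x y. x \<in> S \<Longrightarrow> x \<le> y \<Longrightarrow> y \<in> S"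
    and s: "s \<in> S" and above: "\<And>y. y \<in> S \<Longrightarrow> y > s \<Longrightarrow> \<phi> y = 0"
  shows "\<exists>r>0. \<forall>y\<in>S. \<bar>y - s\<bar> < r \<longrightarrow> \<phi> y = 0"
proof -
  obtain r a where r: "r > 0"
    and a: "\<And>y. y \<in> S \<Longrightarrow> \<bar>y - s\<bar> < r \<Longrightarrow> (\<lambda>n. a n * (y - s) ^ n) sums \<phi> y"
    using ra s unfolding real_analytic_on_def by blast
  have "a n = 0" for n
  proof (rule powser_sums_0_imp_coeffs_0[OF r])
    fix t :: real assume t: "0 < t" "t < r"
    then have "s + t \<in> S" using up[OF s, of "s + t"] by simp
    then show "(\<lambda>n. a n * t ^ n) sums 0" using a[of "s + t"] above[of "s + t"] t by simp
  qed
  then have "\<phi> y = 0" if "y \<in> S" "\<bar>y - s\<bar> < r" for y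
    using a[OF that] by (simp add: sums_iff)
  with r show ?thesis by blast
qed

text \<open>The infimum of the final segments on which \<open>\<phi>\<close> vanishes cannot lie in \<open>S\<close>: there the
  power series of \<open>\<phi>\<close> would vanish identically.\<close>

lemma real_analytic_on_eq_0_from_above:
  assumes ra: "real_analytic_on \<phi> S" and up: "\<And>x y. x \<in> S \<Longrightarrow> x \<le> y \<Longrightarrow> y \<in> S"
    and zero: "\<And>y. y \<in> S \<Longrightarrow> y \<ge> b \<Longrightarrow> \<phi> y = 0" and x: "x \<in> S"
  shows "\<phi> x = 0"
proof (cases "x \<ge> b")
  case True then show ?thesis using zero x by simp
next
  case False
  define Z where "Z = {t \<in> {x..b}. \<forall>y\<in>S. y \<ge> t \<longrightarrow> \<phi> y = 0}"
  have bZ: "b \<in> Z" unfolding Z_def using False zero by auto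
  have Zbdd: "bdd_below Z" unfolding Z_def by (auto intro: bdd_belowI[of _ x])
  define s where "s = Inf Z"
  have "x \<le> s" unfolding s_def using bZ by (intro cInf_greatest) (auto simp: Z_def)
  then have sS: "s \<in> S" using up[OF x] by blast
  have above: "\<phi> y = 0" if "y \<in> S" "y > s" for y
  proof -
    obtain t where "t \<in> Z" "t < y" using cInf_less_iff[of Z y] bZ Zbdd \<open>y > s\<close> s_def by blast
    then show ?thesis using \<open>y \<in> S\<close> unfolding Z_def by auto
  qed
  obtain r where r: "r > 0" and near: "\<And>y. y \<in> S \<Longrightarrow> \<bar>y - s\<bar> < r \<Longrightarrow> \<phi> y = 0"
    using real_analytic_on_eq_0_near[of \<phi> S s] ra up sS above by blast
  have sb: "s \<le> b" unfolding s_def using bZ Zbdd by (rule cInf_lower)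
  show ?thesis
  proof (cases "s = x")
    case True then show ?thesis using near x r by simp
  next
    case False
    define y where "y = max x (s - r/2)"
    have "\<phi> y' = 0" if "y' \<in> S" "y \<le> y'" for y'
    proof (cases "y' > s")
      case False
      then have "\<bar>y' - s\<bar> < r" using \<open>y \<le> y'\<close> r by (simp add: y_def)
      then show ?thesis using near \<open>y' \<in> S\<close> by blast
    qed (use above that in blast)
    moreover have "y \<in> {x..b}" using \<open>x \<le> s\<close> sb r by (simp add: y_def)
    ultimately have "y \<in> Z" unfolding Z_def by blast
    then have "s \<le> y" unfolding s_def using Zbdd by (rule cInf_lower)
    then show ?thesis using False \<open>x \<le> s\<close> r by (simp add: y_def)
  qed
qed

lemma real_analytic_on_eq_from_above:
  assumes "real_analytic_on f S" "real_analytic_on g S" "\<And>x y. x \<in> S \<Longrightarrow> x \<le> y \<Longrightarrow> y \<in> S"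
    and "\<And>y. y \<in> S \<Longrightarrow> y \<ge> b \<Longrightarrow> f y = g y" and "x \<in> S"
  shows "f x = g x"
  using real_analytic_on_eq_0_from_above[OF real_analytic_on_diff[OF assms(1,2)] assms(3), where b = b and x = x] assms(4,5)
  by simp

section \<open>Periodic functions and Fourier uniqueness\<close>

lemma le_0_if_le_mult_all_pos:
  fixes x K :: real
  assumes "K \<ge> 0" and "\<And>e. e > 0 \<Longrightarrow> x \<le> e * K"
  shows "x \<le> 0"
proof (rule field_le_epsilon)
  fix e :: real assume "e > 0"
  then have "x \<le> e / (K + 1) * K" using assms by (intro assms(2)) (simp add: add_nonneg_pos)
  also have "\<dots> \<le> e" using \<open>e > 0\<close> assms(1) by (simp add: field_simps)
  finally show "x \<le> 0 + e" by simp
qed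

lemma eq_0_if_abs_le_divide_all_pos:
  fixes x K :: real
  assumes "\<And>W. W > 0 \<Longrightarrow> \<bar>x\<bar> \<le> K / W"
  shows "x = 0"
proof -
  have "K \<ge> 0" using assms[of 1] by simp
  moreover have "\<bar>x\<bar> \<le> e * K" if "e > 0" for e using assms[of "1 / e"] that by (simp add: mult.commute)
  ultimately show ?thesis using le_0_if_le_mult_all_pos[of K "\<bar>x\<bar>"] by simp
qed

lemma periodic_plus_of_int:
  fixes p :: "real \<Rightarrow> 'a"
  assumes "\<And>x. p (x + T) = p x"
  shows "p (x + of_int n * T) = p x"
proof -
  interpret periodic_fun_simple p T by standard (rule assms)
  show ?thesis by (rule plus_of_int)
qed

lemma floor_shift_into_period:
  fixes T x :: real assumes "T > 0"
  shows "x - of_int \<lfloor>x / T\<rfloor> * T \<in> {0..<T}"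
proof -
  have "of_int \<lfloor>x / T\<rfloor> \<le> x / T" "x / T < of_int \<lfloor>x / T\<rfloor> + 1" by linarith+
  then have "of_int \<lfloor>x / T\<rfloor> * T \<le> x" "x < (of_int \<lfloor>x / T\<rfloor> + 1) * T"
    using pos_le_divide_eq[OF assms] pos_divide_less_eq[OF assms] by blast+
  then show ?thesis by (auto simp: algebra_simps)
qed

lemma periodic_value_in_period:
  fixes p :: "real \<Rightarrow> 'a"
  assumes "\<And>x. p (x + T) = p x" and "T > 0"
  obtains y where "y \<in> {0..T}" "p x = p y"
proof -
  define n where "n = \<lfloor>x / T\<rfloor>"
  have "x - of_int n * T \<in> {0..T}" using floor_shift_into_period[OF assms(2), of x] by (simp add: n_def)
  moreover have "p x = p (x - of_int n * T)"
    using periodic_plus_of_int[of p T "x - of_int n * T" n, OF assms(1)] by simp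
  ultimately show ?thesis using that by blast
qed

lemma periodic_bounded:
  fixes p :: "real \<Rightarrow> real"
  assumes "T > 0" and "continuous_on UNIV p" and "\<And>x. p (x + T) = p x"
  obtains M where "M \<ge> 0" "\<And>x. \<bar>p x\<bar> \<le> M"
proof -
  have pc: "continuous_on {0..T} p" using assms(2) by (rule continuous_on_subset) auto
  obtain M where M: "\<And>y. y \<in> {0..T} \<Longrightarrow> \<bar>p y\<bar> \<le> M"
    using compact_imp_bounded[OF compact_continuous_image[OF pc compact_Icc]]
    by (force simp: bounded_iff)
  show ?thesis
  proof (rule that)
    show "M \<ge> 0" using M[of 0] assms(1) by auto
    fix x
    obtain y where "y \<in> {0..T}" "p x = p y" using periodic_value_in_period[of p T x, OF assms(3) assms(1)] .
    then show "\<bar>p x\<bar> \<le> M" using M by simp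
  qed
qed

lemma integral_periodic_shift:
  fixes \<phi> :: "real \<Rightarrow> real"
  assumes T: "T > 0" and c: "continuous_on UNIV \<phi>" and per: "\<And>x. \<phi> (x + T) = \<phi> x"
  shows "integral {s..s+T} \<phi> = integral {0..T} \<phi>"
proof -
  have int: "\<phi> integrable_on {a..b}" for a b
    by (rule integrable_continuous_interval) (rule continuous_on_subset[OF c], auto)
  define n where "n = \<lfloor>s / T\<rfloor>"
  define r where "r = s - of_int n * T"
  have r: "r \<in> {0..T}" using floor_shift_into_period[OF T, of s] by (simp add: r_def n_def)
  have "integral {s..s+T} \<phi> = integral {r..r+T} (\<lambda>x. \<phi> (x + of_int n * T))"
    using integral_shift_Icc_real[of r "r+T" \<phi> "of_int n * T"]
    by (simp add: o_def add.commute r_def algebra_simps)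
  also have "\<dots> = integral {r..T} \<phi> + integral {T..r+T} \<phi>"
    using r int periodic_plus_of_int[of \<phi> T, OF per]
    by (simp add: Henstock_Kurzweil_Integration.integral_combine)
  also have "integral {T..r+T} \<phi> = integral {0..r} \<phi>"
    using integral_shift_Icc_real[of 0 r \<phi> T] per by (simp add: o_def add.commute)
  also have "integral {r..T} \<phi> + integral {0..r} \<phi> = integral {0..T} \<phi>"
    using r int Henstock_Kurzweil_Integration.integral_combine[of 0 r T \<phi>] by auto
  finally show ?thesis .
qed

lemma integral_periodic_translate:
  fixes \<phi> :: "real \<Rightarrow> real"
  assumes "T > 0" and "continuous_on UNIV \<phi>" and "\<And>x. \<phi> (x + T) = \<phi> x"
  shows "integral {0..T} (\<lambda>y. \<phi> (y - c)) = integral {0..T} \<phi>"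
  using integral_shift_Icc_real[of 0 T \<phi> "-c"] integral_periodic_shift[OF assms, of "-c"]
  by (simp add: o_def add.commute)

lemma periodic_mean_zero_integral_bounded:
  fixes p :: "real \<Rightarrow> real"
  assumes T: "T > 0" and c: "continuous_on UNIV p" and per: "\<And>x. p (x + T) = p x"
    and mean: "integral {0..T} p = 0" and M: "\<And>x. \<bar>p x\<bar> \<le> M"
    and "a \<le> t"
  shows "\<bar>integral {a..t} p\<bar> \<le> T * M"
proof -
  have int: "p integrable_on {u..v}" for u v
    by (rule integrable_continuous_interval) (rule continuous_on_subset[OF c], auto)
  have periods: "integral {a..a + real n * T} p = 0" for n
  proof (induction n)
    case (Suc n)
    have "integral {a..a + real (Suc n) * T} p
        = integral {a..a + real n * T} p + integral {a + real n * T..a + real n * T + T} p"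
      using T int by (simp add: algebra_simps Henstock_Kurzweil_Integration.integral_combine)
    then show ?case using Suc integral_periodic_shift[OF T c per] mean by simp
  qed simp
  define k where "k = nat \<lfloor>(t - a) / T\<rfloor>"
  have "real k = of_int \<lfloor>(t - a) / T\<rfloor>" using T \<open>a \<le> t\<close> by (simp add: k_def)
  then have k: "t - a - real k * T \<in> {0..<T}" using floor_shift_into_period[OF T, of "t - a"] by simp
  then have "integral {a..t} p = integral {a..a + real k * T} p + integral {a + real k * T..t} p"
    using T int by (simp add: Henstock_Kurzweil_Integration.integral_combine)
  then have "\<bar>integral {a..t} p\<bar> = \<bar>integral {a + real k * T..t} p\<bar>" using periods by simp
  also have "\<dots> \<le> M * (t - (a + real k * T))"
    using integral_bound[of "a + real k * T" t p M] k M c by (auto intro: continuous_on_subset)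
  also have "\<dots> \<le> T * M" using k M[of 0] by (simp add: mult.commute mult_left_mono)
  finally show ?thesis .
qed

inductive trig_poly :: "real \<Rightarrow> (real \<Rightarrow> real) \<Rightarrow> bool" for \<omega> where
  cos: "trig_poly \<omega> (\<lambda>x. cos (of_int k * \<omega> * x))"
| sin: "trig_poly \<omega> (\<lambda>x. sin (of_int k * \<omega> * x))"
| scale: "trig_poly \<omega> f \<Longrightarrow> trig_poly \<omega> (\<lambda>x. c * f x)"
| add: "trig_poly \<omega> f \<Longrightarrow> trig_poly \<omega> g \<Longrightarrow> trig_poly \<omega> (\<lambda>x. f x + g x)"

lemma trig_poly_cong: "trig_poly \<omega> f \<Longrightarrow> (\<And>x. f x = g x) \<Longrightarrow> trig_poly \<omega> g"
  by (metis ext)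

lemma trig_poly_const: "trig_poly \<omega> (\<lambda>x. c)"
  using trig_poly.scale[OF trig_poly.cos[of \<omega> 0], of c] by (rule trig_poly_cong) simp

lemma trig_products_of_int:
  fixes w x :: real
  shows "cos (of_int k * w * x) * cos (of_int j * w * x)
           = 1/2 * cos (of_int (k-j) * w * x) + 1/2 * cos (of_int (k+j) * w * x)"
    and "cos (of_int k * w * x) * sin (of_int j * w * x)
           = (-1/2) * sin (of_int (k-j) * w * x) + 1/2 * sin (of_int (k+j) * w * x)"
    and "sin (of_int k * w * x) * cos (of_int j * w * x)
           = 1/2 * sin (of_int (k+j) * w * x) + 1/2 * sin (of_int (k-j) * w * x)"
    and "sin (of_int k * w * x) * sin (of_int j * w * x)
           = 1/2 * cos (of_int (k-j) * w * x) + (-1/2) * cos (of_int (k+j) * w * x)"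
proof -
  have e: "of_int (k-j)*w*x = of_int k*w*x - of_int j*w*x" "of_int (k+j)*w*x = of_int k*w*x + of_int j*w*x"
    by (simp_all add: algebra_simps)
  show "cos (of_int k * w * x) * cos (of_int j * w * x)
           = 1/2 * cos (of_int (k-j) * w * x) + 1/2 * cos (of_int (k+j) * w * x)"
    unfolding e by (simp only: cos_times_cos) simp
  show "cos (of_int k * w * x) * sin (of_int j * w * x)
           = (-1/2) * sin (of_int (k-j) * w * x) + 1/2 * sin (of_int (k+j) * w * x)"
    unfolding e by (simp only: cos_times_sin) simp
  show "sin (of_int k * w * x) * cos (of_int j * w * x)
           = 1/2 * sin (of_int (k+j) * w * x) + 1/2 * sin (of_int (k-j) * w * x)"
    unfolding e by (simp only: sin_times_cos) simp
  show "sin (of_int k * w * x) * sin (of_int j * w * x)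
           = 1/2 * cos (of_int (k-j) * w * x) + (-1/2) * cos (of_int (k+j) * w * x)"
    unfolding e by (simp only: sin_times_sin) simp
qed

lemma trig_poly_mult_basic:
  assumes "trig_poly \<omega> g"
  shows "trig_poly \<omega> (\<lambda>x. cos (of_int k * \<omega> * x) * g x)"
    and "trig_poly \<omega> (\<lambda>x. sin (of_int k * \<omega> * x) * g x)"
  using assms
proof (induction rule: trig_poly.induct)
  case (cos j)
  { case 1 show ?case
      by (rule trig_poly_cong[OF _ trig_products_of_int(1)[symmetric]]) (intro trig_poly.intros)
  next
    case 2 show ?case
      by (rule trig_poly_cong[OF _ trig_products_of_int(3)[symmetric]]) (intro trig_poly.intros) }
next
  case (sin j)
  { case 1 show ?case
      by (rule trig_poly_cong[OF _ trig_products_of_int(2)[symmetric]]) (intro trig_poly.intros)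
  next
    case 2 show ?case
      by (rule trig_poly_cong[OF _ trig_products_of_int(4)[symmetric]]) (intro trig_poly.intros) }
next
  case (scale f c)
  { case 1 show ?case
      using trig_poly.scale[OF scale.IH(1), of c] by (rule trig_poly_cong) (simp add: algebra_simps)
  next
    case 2 show ?case
      using trig_poly.scale[OF scale.IH(2), of c] by (rule trig_poly_cong) (simp add: algebra_simps) }
next
  case (add f g)
  { case 1 show ?case
      using trig_poly.add[OF add.IH(1) add.IH(3)] by (rule trig_poly_cong) (simp add: algebra_simps)
  next
    case 2 show ?case
      using trig_poly.add[OF add.IH(2) add.IH(4)] by (rule trig_poly_cong) (simp add: algebra_simps) }
qed

lemma trig_poly_mult: "trig_poly \<omega> f \<Longrightarrow> trig_poly \<omega> g \<Longrightarrow> trig_poly \<omega> (\<lambda>x. f x * g x)"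
proof (induction rule: trig_poly.induct)
  case (scale f c)
  show ?case
    using trig_poly.scale[OF scale.IH[OF scale.prems], of c] by (rule trig_poly_cong) (simp add: algebra_simps)
next
  case (add f h)
  show ?case
    using trig_poly.add[OF add.IH(1)[OF add.prems] add.IH(2)[OF add.prems]]
    by (rule trig_poly_cong) (simp add: algebra_simps)
qed (use trig_poly_mult_basic in blast)+

lemma continuous_on_trig_poly: "trig_poly \<omega> f \<Longrightarrow> continuous_on UNIV f"
  by (induction rule: trig_poly.induct) (auto intro!: continuous_intros)

lemma trig_poly_real_polynomial_function_cis:
  assumes "real_polynomial_function g"
  shows "trig_poly \<omega> (\<lambda>x. g (cis (\<omega> * x)))"
  using assms
proof (induction rule: real_polynomial_function.induct)
  case (linear f)
  then interpret bounded_linear f .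
  have eq: "f z = Re z * f 1 + Im z * f \<i>" for z
  proof -
    have "z = Re z *\<^sub>R 1 + Im z *\<^sub>R \<i>" by (simp add: complex_eq_iff)
    then have "f z = f (Re z *\<^sub>R 1 + Im z *\<^sub>R \<i>)" by (rule arg_cong)
    then show ?thesis by (simp only: add scale real_scaleR_def)
  qed
  have "trig_poly \<omega> (\<lambda>x. f 1 * cos (of_int 1 * \<omega> * x) + f \<i> * sin (of_int 1 * \<omega> * x))"
    by (intro trig_poly.intros)
  then show ?case
    by (rule trig_poly_cong) (use eq[of "cis (\<omega> * _)"] in simp)
qed (auto intro: trig_poly_const trig_poly.add trig_poly_mult)

lemma trig_poly_orthogonal:
  fixes p :: "real \<Rightarrow> real"
  assumes pc: "continuous_on UNIV p"
    and cos_coeffs: "\<And>k::nat. integral {0..T} (\<lambda>x. cos (real k * \<omega> * x) * p x) = 0"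
    and sin_coeffs: "\<And>k::nat. integral {0..T} (\<lambda>x. sin (real k * \<omega> * x) * p x) = 0"
    and "trig_poly \<omega> f"
  shows "integral {0..T} (\<lambda>x. f x * p x) = 0"
  using \<open>trig_poly \<omega> f\<close>
proof (induction rule: trig_poly.induct)
  case (cos k)
  show ?case using cos_coeffs[of "nat \<bar>k\<bar>"] by (cases "k \<ge> 0") simp_all
next
  case (sin k)
  show ?case using sin_coeffs[of "nat \<bar>k\<bar>"] by (cases "k \<ge> 0") (simp_all add: integral_neg)
next
  case (scale f c)
  then show ?case by (simp add: mult.assoc)
next
  case (add f g)
  have int: "(\<lambda>x. h x * p x) integrable_on {0..T}" if "trig_poly \<omega> h" for h
    using continuous_on_trig_poly[OF that] pc
    by (intro integrable_continuous_interval continuous_intros) (auto intro: continuous_on_subset)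
  show ?case using integral_add[OF int[OF add.hyps(1)] int[OF add.hyps(2)]] add.IH
    by (simp add: distrib_right)
qed

text \<open>Near the cut of \<open>Arg\<close> along the negative reals use \<open>Arg (-z) + pi\<close> instead, which agrees
  with \<open>Arg z\<close> up to a multiple of \<open>2 * pi\<close>.\<close>

lemma continuous_on_periodic_comp_Arg:
  fixes p :: "real \<Rightarrow> real"
  assumes pc: "continuous_on UNIV p" and per: "\<And>x. p (x + T) = p x"
  shows "continuous_on (sphere 0 1) (\<lambda>z. p (T * Arg z / (2*pi)))"
proof (rule continuous_at_imp_continuous_on, rule ballI)
  define G :: "complex \<Rightarrow> real" where "G z = p (T * (Arg (-z) + pi) / (2*pi))" for z
  have p_at: "isCont p t" for t using pc by (simp add: continuous_on_eq_continuous_at)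
  have FG: "p (T * Arg w / (2*pi)) = G w" if "w \<noteq> 0" for w
  proof (cases "Arg w \<le> 0")
    case True
    then have "T * (Arg (-w) + pi) / (2*pi) = T * Arg w / (2*pi) + T"
      using Arg_minus[OF that] by (simp add: field_simps)
    then show ?thesis unfolding G_def using per by simp
  qed (use Arg_minus[OF that] in \<open>simp add: G_def\<close>)
  fix z :: complex assume "z \<in> sphere 0 1"
  then have z0: "z \<noteq> 0" by auto
  show "isCont (\<lambda>z. p (T * Arg z / (2*pi))) z"
  proof (cases "z \<in> \<real>\<^sub>\<le>\<^sub>0")
    case False
    have "isCont (\<lambda>z. T * Arg z / (2*pi)) z" by (intro continuous_intros continuous_at_Arg False) simp
    then show ?thesis by (rule continuous_at_compose[of _ _ p, unfolded o_def]) (rule p_at)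
  next
    case True
    then have "-z \<notin> \<real>\<^sub>\<le>\<^sub>0" using z0 by (auto simp: complex_nonpos_Reals_iff complex_eq_iff)
    then have "isCont (\<lambda>z. Arg (-z)) z"
      using continuous_at_compose[of z uminus Arg] continuous_at_Arg by (auto intro: continuous_intros simp: o_def)
    then have "isCont (\<lambda>z. T * (Arg (-z) + pi) / (2*pi)) z" by (intro continuous_intros) simp_all
    then have "isCont G z" unfolding G_def by (rule continuous_at_compose[of _ _ p, unfolded o_def]) (rule p_at)
    moreover have "eventually (\<lambda>w. p (T * Arg w / (2*pi)) = G w) (nhds z)"
      using t1_space_nhds[OF z0] by eventually_elim (use FG in auto)
    ultimately show ?thesis using isCont_cong[of "\<lambda>w. p (T * Arg w / (2*pi))" G z] by blast
  qed
qed

lemma periodic_comp_Arg_cis: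
  fixes p :: "real \<Rightarrow> real"
  assumes T: "T > 0" and per: "\<And>x. p (x + T) = p x" and y: "y \<in> {0..T}"
  shows "p (T * Arg (cis (2*pi/T * y)) / (2*pi)) = p y"
proof -
  have t: "0 \<le> 2*pi/T * y" "2*pi/T * y \<le> 2*pi" using y T by (auto simp: field_simps)
  show ?thesis
  proof (cases "2*pi/T * y \<le> pi")
    case True
    moreover have "- pi < 2*pi/T * y" using t(1) pi_gt_zero by linarith
    ultimately have "Arg (cis (2*pi/T * y)) = 2*pi/T * y" by (intro Arg_cis) auto
    then show ?thesis using T by simp
  next
    case False
    have "cis (2*pi/T * y) = cis (2*pi/T * y - 2*pi)" by (simp add: complex_eq_iff cos_diff sin_diff)
    moreover have "Arg (cis (2*pi/T * y - 2*pi)) = 2*pi/T * y - 2*pi" using t False by (intro Arg_cis) auto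
    moreover have "T * (2*pi/T * y - 2*pi) / (2*pi) = y - T" using T by (simp add: field_simps)
    ultimately show ?thesis using per[of "y - T"] by simp
  qed
qed

lemma periodic_uniform_approx_trig_poly:
  fixes p :: "real \<Rightarrow> real"
  assumes "T > 0" and "continuous_on UNIV p" and "\<And>x. p (x + T) = p x" and "e > 0"
  obtains \<phi> where "trig_poly (2*pi/T) \<phi>" "\<And>y. y \<in> {0..T} \<Longrightarrow> \<bar>p y - \<phi> y\<bar> \<le> e"
proof -
  obtain g where g: "real_polynomial_function g"
    "\<And>z. z \<in> sphere 0 1 \<Longrightarrow> \<bar>p (T * Arg z / (2*pi)) - g z\<bar> < e"
    using Stone_Weierstrass_real_polynomial_function[OF compact_sphere
        continuous_on_periodic_comp_Arg[OF assms(2,3)] \<open>e > 0\<close>] by blast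
  show ?thesis
  proof (rule that)
    show "trig_poly (2*pi/T) (\<lambda>y. g (cis (2*pi/T * y)))" by (rule trig_poly_real_polynomial_function_cis[OF g(1)])
    show "\<bar>p y - g (cis (2*pi/T * y))\<bar> \<le> e" if "y \<in> {0..T}" for y
      using g(2)[of "cis (2*pi/T * y)"] periodic_comp_Arg_cis[of T p, OF assms(1,3) that] by simp
  qed
qed

text \<open>Uniqueness of Fourier coefficients: \<open>\<integral>p\<^sup>2 = \<integral>p (p - \<phi>)\<close> for every trigonometric
  polynomial \<open>\<phi>\<close>, and \<open>p - \<phi>\<close> can be made uniformly small.\<close>

lemma periodic_eq_0_if_fourier_coeffs_eq_0:
  fixes p :: "real \<Rightarrow> real"
  assumes T: "T > 0" and pc: "continuous_on UNIV p" and per: "\<And>x. p (x + T) = p x"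
    and cos_coeffs: "\<And>k::nat. integral {0..T} (\<lambda>x. cos (real k * (2*pi/T) * x) * p x) = 0"
    and sin_coeffs: "\<And>k::nat. integral {0..T} (\<lambda>x. sin (real k * (2*pi/T) * x) * p x) = 0"
  shows "p x = 0"
proof -
  have pcT: "continuous_on {0..T} p" using pc by (rule continuous_on_subset) auto
  obtain M where M0: "M \<ge> 0" and M: "\<And>y. \<bar>p y\<bar> \<le> M" using periodic_bounded[OF T pc per] by blast
  have int_p2: "(\<lambda>y. p y * p y) integrable_on {0..T}"
    by (intro integrable_continuous_interval continuous_intros pcT)
  have le: "integral {0..T} (\<lambda>y. p y * p y) \<le> e * (M * T)" if e: "e > 0" for e
  proof -
    obtain \<phi> where \<phi>: "trig_poly (2*pi/T) \<phi>" and close: "\<And>y. y \<in> {0..T} \<Longrightarrow> \<bar>p y - \<phi> y\<bar> \<le> e"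
      using periodic_uniform_approx_trig_poly[OF T pc per e] by blast
    have \<phi>c: "continuous_on {0..T} \<phi>" using continuous_on_trig_poly[OF \<phi>] by (rule continuous_on_subset) auto
    have i1: "(\<lambda>y. \<phi> y * p y) integrable_on {0..T}" and i2: "(\<lambda>y. (p y - \<phi> y) * p y) integrable_on {0..T}"
      by (intro integrable_continuous_interval continuous_intros pcT \<phi>c)+
    have "integral {0..T} (\<lambda>y. p y * p y) = integral {0..T} (\<lambda>y. (p y - \<phi> y) * p y + \<phi> y * p y)"
      by (simp add: algebra_simps)
    also have "\<dots> = integral {0..T} (\<lambda>y. (p y - \<phi> y) * p y)"
      using integral_add[OF i2 i1] trig_poly_orthogonal[OF pc cos_coeffs sin_coeffs \<phi>] by simp
    also have "\<dots> \<le> integral {0..T} (\<lambda>y. e * M)"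
    proof (rule integral_le[OF i2])
      fix y assume y: "y \<in> {0..T}"
      have "(p y - \<phi> y) * p y \<le> \<bar>p y - \<phi> y\<bar> * \<bar>p y\<bar>" by (simp add: abs_mult[symmetric])
      also have "\<dots> \<le> e * M" using close[OF y] M[of y] e by (intro mult_mono) auto
      finally show "(p y - \<phi> y) * p y \<le> e * M" .
    qed (intro integrable_continuous_interval continuous_intros)
    finally show ?thesis using T by (simp add: mult_ac)
  qed
  have "integral {0..T} (\<lambda>y. p y * p y) \<le> 0"
    using M0 T le by (intro le_0_if_le_mult_all_pos[of "M * T"]) auto
  moreover have "integral {0..T} (\<lambda>y. p y * p y) \<ge> 0" by (rule integral_nonneg[OF int_p2]) auto
  ultimately have "((\<lambda>y. p y * p y) has_integral 0) (cbox 0 T)"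
    using int_p2 by (simp add: has_integral_integral)
  then have zero: "p y = 0" if "y \<in> {0..T}" for y
    using has_integral_0_cbox_imp_0[of 0 T "\<lambda>y. p y * p y" y] that pcT T by (auto intro!: continuous_intros)
  obtain y where "y \<in> {0..T}" "p x = p y" using periodic_value_in_period[of p T x, OF per T] .
  then show ?thesis using zero by simp
qed

section \<open>Fresnel-type integrals\<close>

lemma integral_derivative_div_bound:
  fixes U u :: "real \<Rightarrow> real"
  assumes W: "0 < W1" "W1 \<le> W2"
    and Uc: "continuous_on {W1..W2} U" and uc: "continuous_on {W1..W2} u"
    and U: "\<And>w. w \<in> {W1..W2} \<Longrightarrow> (U has_real_derivative u w) (at w within {W1..W2})"
    and B: "\<And>w. w \<in> {W1..W2} \<Longrightarrow> \<bar>U w\<bar> \<le> B"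
  shows "\<bar>integral {W1..W2} (\<lambda>w. u w / w)\<bar> \<le> 2 * B / W1"
proof -
  have w0: "w \<noteq> 0" if "w \<in> {W1..W2}" for w using that W by auto
  have h: "((\<lambda>w. u w / w - U w / w\<^sup>2) has_integral (U W2 / W2 - U W1 / W1)) {W1..W2}"
  proof (rule fundamental_theorem_of_calculus[OF W(2)])
    fix w assume w: "w \<in> {W1..W2}"
    show "((\<lambda>w. U w / w) has_vector_derivative (u w / w - U w / w\<^sup>2)) (at w within {W1..W2})"
      unfolding has_real_derivative_iff_has_vector_derivative[symmetric]
      using U[OF w] w0[OF w] by (auto intro!: derivative_eq_intros simp: field_simps power2_eq_square)
  qed
  have int: "(\<lambda>w. U w / w\<^sup>2) integrable_on {W1..W2}" "(\<lambda>w. B / w\<^sup>2) integrable_on {W1..W2}"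
    using w0 by (auto intro!: integrable_continuous_interval continuous_intros Uc)
  have "integral {W1..W2} (\<lambda>w. u w / w) = integral {W1..W2} (\<lambda>w. (u w / w - U w / w\<^sup>2) + U w / w\<^sup>2)"
    by simp
  also have "\<dots> = U W2 / W2 - U W1 / W1 + integral {W1..W2} (\<lambda>w. U w / w\<^sup>2)"
    using integral_add[OF has_integral_integrable[OF h] int(1)] integral_unique[OF h] by simp
  finally have eq: "integral {W1..W2} (\<lambda>w. u w / w) = U W2 / W2 - U W1 / W1 + integral {W1..W2} (\<lambda>w. U w / w\<^sup>2)" .
  have "((\<lambda>w. B / w\<^sup>2) has_integral (- B / W2 - - B / W1)) {W1..W2}"
  proof (rule fundamental_theorem_of_calculus[OF W(2)])
    fix w assume w: "w \<in> {W1..W2}"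
    show "((\<lambda>w. - B / w) has_vector_derivative (B / w\<^sup>2)) (at w within {W1..W2})"
      unfolding has_real_derivative_iff_has_vector_derivative[symmetric]
      using w0[OF w] by (auto intro!: derivative_eq_intros simp: field_simps power2_eq_square)
  qed
  moreover have "\<bar>integral {W1..W2} (\<lambda>w. U w / w\<^sup>2)\<bar> \<le> integral {W1..W2} (\<lambda>w. B / w\<^sup>2)"
    using integral_norm_bound_integral[OF int] B by (simp add: abs_div divide_right_mono)
  ultimately have "\<bar>integral {W1..W2} (\<lambda>w. U w / w\<^sup>2)\<bar> \<le> B / W1 - B / W2" by (simp add: integral_unique)
  moreover have "\<bar>U W / W\<bar> \<le> B / W" if "W \<in> {W1..W2}" for W
    using B[OF that] that W by (simp add: abs_div divide_right_mono)
  then have "\<bar>U W2 / W2\<bar> \<le> B / W2" "\<bar>U W1 / W1\<bar> \<le> B / W1" using W by auto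
  ultimately have "\<bar>integral {W1..W2} (\<lambda>w. u w / w)\<bar> \<le> B / W2 + B / W1 + (B / W1 - B / W2)"
    unfolding eq by linarith
  then show ?thesis by simp
qed
lemma integral_comp_minus_square_tail_bound:
  fixes p :: "real \<Rightarrow> real"
  assumes c: "continuous_on UNIV p" and B: "\<And>a t. a \<le> t \<Longrightarrow> \<bar>integral {a..t} p\<bar> \<le> B"
    and W: "0 < W1" "W1 \<le> W2"
  shows "\<bar>integral {W1..W2} (\<lambda>w. p (y - w\<^sup>2))\<bar> \<le> B / W1"
proof -
  define a where "a = y - W2\<^sup>2"
  define b where "b = y - W1\<^sup>2"
  define P where "P t = integral {a..t} p" for t
  have range: "y - w\<^sup>2 \<in> {a..b}" if "w \<in> {W1..W2}" for w
    using that W unfolding a_def b_def by (auto intro!: power_mono)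
  have pc: "continuous_on {a..b} p" using c by (rule continuous_on_subset) auto
  have Pc: "continuous_on {a..b} P"
    unfolding P_def by (rule indefinite_integral_continuous_1) (rule integrable_continuous_interval[OF pc])
  have U: "((\<lambda>w. P (y - w\<^sup>2)) has_real_derivative (- 2 * w * p (y - w\<^sup>2))) (at w within {W1..W2})"
    if w: "w \<in> {W1..W2}" for w
  proof -
    have "(P has_real_derivative p (y - w\<^sup>2)) (at (y - w\<^sup>2) within {a..b})"
      unfolding P_def has_real_derivative_iff_has_vector_derivative
      by (rule integral_has_vector_derivative[OF pc range[OF w]])
    then have "(P has_real_derivative p (y - w\<^sup>2)) (at (y - w\<^sup>2) within (\<lambda>w. y - w\<^sup>2) ` {W1..W2})"
      by (rule has_field_derivative_subset) (use range in auto)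
    moreover have "((\<lambda>w. y - w\<^sup>2) has_real_derivative - 2 * w) (at w within {W1..W2})"
      by (auto intro!: derivative_eq_intros)
    ultimately show ?thesis using DERIV_image_chain by (fastforce simp: o_def mult_ac)
  qed
  have "\<bar>integral {W1..W2} (\<lambda>w. - 2 * w * p (y - w\<^sup>2) / w)\<bar> \<le> 2 * B / W1"
  proof (rule integral_derivative_div_bound[OF W _ _ U])
    show "continuous_on {W1..W2} (\<lambda>w. P (y - w\<^sup>2))"
      by (rule continuous_on_compose2[OF Pc]) (use range in \<open>auto intro!: continuous_intros\<close>)
    show "continuous_on {W1..W2} (\<lambda>w. - 2 * w * p (y - w\<^sup>2))"
      by (intro continuous_intros continuous_on_compose2[OF c]) auto
    show "\<bar>P (y - w\<^sup>2)\<bar> \<le> B" if "w \<in> {W1..W2}" for w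
      unfolding P_def using B range[OF that] by simp
  qed
  moreover have "integral {W1..W2} (\<lambda>w. - 2 * w * p (y - w\<^sup>2) / w) = - 2 * integral {W1..W2} (\<lambda>w. p (y - w\<^sup>2))"
    using W by (subst integral_cong[of _ _ "\<lambda>w. - 2 * p (y - w\<^sup>2)"]) auto
  ultimately show ?thesis by simp
qed

lemma limit_at_top_with_rate:
  fixes R :: "real \<Rightarrow> real"
  assumes diff: "\<And>W1 W2. 0 < W1 \<Longrightarrow> W1 \<le> W2 \<Longrightarrow> \<bar>R W2 - R W1\<bar> \<le> B / W1"
  obtains L where "\<And>W. W > 0 \<Longrightarrow> \<bar>R W - L\<bar> \<le> B / W"
proof -
  have B0: "B \<ge> 0" using diff[of 1 1] by simp
  have "Cauchy (\<lambda>n. R (real n))"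
  proof (rule CauchyI)
    fix e :: real assume "e > 0"
    obtain N :: nat where N: "real N > max 1 (B / e)" using reals_Archimedean2 by blast
    then have "B / real N < e" using \<open>e > 0\<close> by (simp add: divide_less_eq mult.commute)
    have "\<bar>R (real m) - R (real n)\<bar> \<le> B / real N" if "N \<le> m" "N \<le> n" for m n
    proof -
      have "\<bar>R (real m) - R (real n)\<bar> \<le> B / min (real m) (real n)"
        using diff[of "real m" "real n"] diff[of "real n" "real m"] that N
        by (cases "m \<le> n") (auto simp: min_def abs_minus_commute)
      also have "\<dots> \<le> B / real N" using that N B0 by (intro divide_left_mono) auto
      finally show ?thesis .
    qed
    then show "\<exists>M. \<forall>m\<ge>M. \<forall>n\<ge>M. norm (R (real m) - R (real n)) < e"
      using \<open>B / real N < e\<close> by force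
  qed
  then obtain L where L: "(\<lambda>n. R (real n)) \<longlonglongrightarrow> L" by (auto simp: Cauchy_convergent_iff convergent_def)
  have "\<bar>L - R W\<bar> \<le> B / W" if W: "W > 0" for W
  proof (rule LIMSEQ_le_const2)
    show "(\<lambda>n. \<bar>R (real n) - R W\<bar>) \<longlonglongrightarrow> \<bar>L - R W\<bar>" by (intro tendsto_intros L)
    obtain N :: nat where "W \<le> real N" using real_arch_simple by blast
    then show "\<exists>N. \<forall>n\<ge>N. \<bar>R (real n) - R W\<bar> \<le> B / W"
      using diff[OF W] by (metis of_nat_le_iff order.trans)
  qed
  then show ?thesis using that[of L] by (simp add: abs_minus_commute)
qed

lemma integral_comp_minus_square_limit:
  fixes p :: "real \<Rightarrow> real"
  assumes c: "continuous_on UNIV p" and B: "\<And>a t. a \<le> t \<Longrightarrow> \<bar>integral {a..t} p\<bar> \<le> B"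
  obtains L where "\<And>W. W > 0 \<Longrightarrow> \<bar>integral {0..W} (\<lambda>w. p (y - w\<^sup>2)) - L\<bar> \<le> B / W"
proof (rule limit_at_top_with_rate)
  fix W1 W2 :: real assume W: "0 < W1" "W1 \<le> W2"
  have "integral {0..W1} (\<lambda>w. p (y - w\<^sup>2)) + integral {W1..W2} (\<lambda>w. p (y - w\<^sup>2))
      = integral {0..W2} (\<lambda>w. p (y - w\<^sup>2))"
    using W by (intro Henstock_Kurzweil_Integration.integral_combine integrable_continuous_interval
        continuous_on_compose2[OF c] continuous_intros) auto
  moreover have "\<bar>integral {W1..W2} (\<lambda>w. p (y - w\<^sup>2))\<bar> \<le> B / W1"
    by (rule integral_comp_minus_square_tail_bound[OF c B W])
  ultimately show "\<bar>integral {0..W2} (\<lambda>w. p (y - w\<^sup>2)) - integral {0..W1} (\<lambda>w. p (y - w\<^sup>2))\<bar> \<le> B / W1"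
    by (metis add_diff_cancel_left')
qed (use that in blast)

lemma sin_ge_cubic:
  fixes x :: real assumes "0 \<le> x" "x \<le> 1"
  shows "x - x^3/3 \<le> sin x"
proof -
  have "\<bar>sin x - (\<Sum>m<4. sin_coeff m * x ^ m)\<bar> \<le> inverse (fact 4) * \<bar>x\<bar> ^ 4"
    by (rule Maclaurin_sin_bound)
  moreover have "(\<Sum>m<4. sin_coeff m * x ^ m) = x - x^3/6"
  proof -
    have "sin_coeff 0 = 0" "sin_coeff 1 = 1" "sin_coeff 2 = 0" "sin_coeff 3 = -1/6"
      by (simp_all add: sin_coeff_def fact_numeral)
    then show ?thesis by (simp add: eval_nat_numeral)
  qed
  moreover have "inverse (fact 4 :: real) = 1/24" by (simp add: fact_numeral)
  ultimately have "\<bar>sin x - (x - x^3/6)\<bar> \<le> x^4/24" using assms by simp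
  then have "x - x^3/6 - sin x \<le> x^4/24" by linarith
  moreover have "x^4 \<le> x^3" using assms by (simp add: power_decreasing eval_nat_numeral mult_left_le_one_le)
  moreover have "x^3 \<ge> 0" using assms by simp
  ultimately show ?thesis by linarith
qed

lemma cos_ge_quadratic: "1 - x^2/2 \<le> cos (x::real)"
proof -
  have "sin (x/2) ^ 2 \<le> (x/2)^2"
    using abs_sin_x_le_abs_x[of "x/2"] by (metis abs_ge_zero power2_abs power_mono)
  then show ?thesis using cos_double_sin[of "x/2"] by (simp add: power_divide)
qed

lemma integral_sin_square_initial_ge:
  fixes \<omega> w0 :: real
  assumes \<omega>: "\<omega> > 0" and w0: "w0 > 0" "\<omega> * w0\<^sup>2 = 1/2"
  shows "integral {0..w0} (\<lambda>w. sin (\<omega> * w\<^sup>2)) \<ge> w0 / 6 - w0 / 168"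
proof -
  have I: "((\<lambda>w. \<omega> * w\<^sup>2 - \<omega>^3 * w^6 / 3) has_integral
      ((\<omega> * w0^3 / 3 - \<omega>^3 * w0^7 / 21) - (\<omega> * 0^3 / 3 - \<omega>^3 * 0^7 / 21))) {0..w0}"
  proof (rule fundamental_theorem_of_calculus)
    fix w assume "w \<in> {0..w0}"
    show "((\<lambda>w. \<omega> * w^3 / 3 - \<omega>^3 * w^7 / 21) has_vector_derivative (\<omega> * w\<^sup>2 - \<omega>^3 * w^6 / 3)) (at w within {0..w0})"
      unfolding has_real_derivative_iff_has_vector_derivative[symmetric]
      by (auto intro!: derivative_eq_intros simp: field_simps eval_nat_numeral)
  qed (use w0 in simp)
  have "\<omega> * w0^3 = w0 / 2" using w0 by (simp add: eval_nat_numeral algebra_simps)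
  moreover have "\<omega>^3 * w0^7 = (\<omega> * w0\<^sup>2)^3 * w0" by (simp add: eval_nat_numeral algebra_simps)
  ultimately have "integral {0..w0} (\<lambda>w. \<omega> * w\<^sup>2 - \<omega>^3 * w^6 / 3) = w0 / 6 - w0 / 168"
    using integral_unique[OF I] w0 by (simp add: power_divide)
  moreover have "integral {0..w0} (\<lambda>w. \<omega> * w\<^sup>2 - \<omega>^3 * w^6 / 3) \<le> integral {0..w0} (\<lambda>w. sin (\<omega> * w\<^sup>2))"
  proof (rule integral_le)
    fix w assume w: "w \<in> {0..w0}"
    have "\<omega> * w\<^sup>2 \<le> \<omega> * w0\<^sup>2" using w \<omega> by (auto intro!: mult_left_mono power_mono)
    then have "(\<omega> * w\<^sup>2) - (\<omega> * w\<^sup>2)^3/3 \<le> sin (\<omega> * w\<^sup>2)" using \<omega> w0 by (intro sin_ge_cubic) auto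
    then show "\<omega> * w\<^sup>2 - \<omega>^3 * w^6 / 3 \<le> sin (\<omega> * w\<^sup>2)" by (simp add: power_mult_distrib flip: power_mult)
  qed (use I in blast, intro integrable_continuous_interval continuous_intros)
  ultimately show ?thesis by simp
qed

text \<open>Beyond \<open>w0\<close> integrate by parts against \<open>d/dw (- cos (\<omega> w\<^sup>2) / (2 \<omega> w))\<close>.\<close>

lemma integral_sin_square_tail_ge:
  fixes \<omega> w0 W :: real
  assumes \<omega>: "\<omega> > 0" and w0: "w0 > 0" "\<omega> * w0\<^sup>2 = 1/2" and W: "w0 \<le> W"
  shows "integral {w0..W} (\<lambda>w. sin (\<omega> * w\<^sup>2)) \<ge> - w0 / 8"
proof -
  have w0_eq: "1 / (2 * \<omega> * w0) = w0"
  proof -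
    have "1 = (2 * \<omega> * w0) * w0" using w0 by (simp add: power2_eq_square algebra_simps)
    then show ?thesis using \<omega> w0 by (simp add: divide_eq_eq mult.commute)
  qed
  define Q where "Q w = - cos (\<omega> * w\<^sup>2) / (2 * \<omega> * w)" for w
  have nz: "w \<noteq> 0" if "w \<in> {w0..W}" for w using that w0 by auto
  have ftc: "((\<lambda>w. sin (\<omega> * w\<^sup>2) + cos (\<omega> * w\<^sup>2) / (2 * \<omega> * w\<^sup>2)) has_integral (Q W - Q w0)) {w0..W}"
  proof (rule fundamental_theorem_of_calculus[OF W])
    fix w assume "w \<in> {w0..W}"
    then show "(Q has_vector_derivative (sin (\<omega> * w\<^sup>2) + cos (\<omega> * w\<^sup>2) / (2 * \<omega> * w\<^sup>2))) (at w within {w0..W})"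
      unfolding has_real_derivative_iff_has_vector_derivative[symmetric] Q_def
      using \<omega> nz by (auto intro!: derivative_eq_intros simp: field_simps power2_eq_square)
  qed
  have ftc2: "((\<lambda>w. 1 / (2 * \<omega> * w\<^sup>2)) has_integral (- 1 / (2 * \<omega> * W) - - 1 / (2 * \<omega> * w0))) {w0..W}"
  proof (rule fundamental_theorem_of_calculus[OF W])
    fix w assume "w \<in> {w0..W}"
    then show "((\<lambda>w. - 1 / (2 * \<omega> * w)) has_vector_derivative (1 / (2 * \<omega> * w\<^sup>2))) (at w within {w0..W})"
      unfolding has_real_derivative_iff_has_vector_derivative[symmetric]
      using \<omega> nz by (auto intro!: derivative_eq_intros simp: field_simps power2_eq_square)
  qed
  have ic: "(\<lambda>w. cos (\<omega> * w\<^sup>2) / (2 * \<omega> * w\<^sup>2)) integrable_on {w0..W}"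
    using nz \<omega> by (intro integrable_continuous_interval continuous_intros) auto
  have "integral {w0..W} (\<lambda>w. cos (\<omega> * w\<^sup>2) / (2 * \<omega> * w\<^sup>2)) \<le> integral {w0..W} (\<lambda>w. 1 / (2 * \<omega> * w\<^sup>2))"
    using ftc2 \<omega> by (intro integral_le[OF ic]) (auto intro: divide_right_mono)
  then have cos_part: "integral {w0..W} (\<lambda>w. cos (\<omega> * w\<^sup>2) / (2 * \<omega> * w\<^sup>2)) \<le> w0 - 1 / (2 * \<omega> * W)"
    using integral_unique[OF ftc2] w0_eq by simp
  have "integral {w0..W} (\<lambda>w. sin (\<omega> * w\<^sup>2))
      = (Q W - Q w0) - integral {w0..W} (\<lambda>w. cos (\<omega> * w\<^sup>2) / (2 * \<omega> * w\<^sup>2))"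
    using integral_add[OF _ ic, of "\<lambda>w. sin (\<omega> * w\<^sup>2)"] integral_unique[OF ftc]
    by (simp add: integrable_continuous_interval continuous_intros)
  moreover have "Q W \<ge> - 1 / (2 * \<omega> * W)"
    unfolding Q_def using \<omega> W w0 by (intro divide_right_mono) (auto simp: divide_simps)
  moreover have "- Q w0 = cos (1/2) * (1 / (2 * \<omega> * w0))" unfolding Q_def w0(2) by simp
  then have "- Q w0 = cos (1/2) * w0" using w0_eq by simp
  moreover have "cos (1/2::real) * w0 \<ge> 7/8 * w0"
    using cos_ge_quadratic[of "1/2"] w0 by (intro mult_right_mono) (auto simp: power2_eq_square)
  ultimately show ?thesis using cos_part by linarith
qed

lemma integral_sin_square_ge:
  fixes \<omega> w0 W :: real
  assumes \<omega>: "\<omega> > 0" and w0: "w0 > 0" "\<omega> * w0\<^sup>2 = 1/2" and W: "w0 \<le> W"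
  shows "integral {0..W} (\<lambda>w. sin (\<omega> * w\<^sup>2)) \<ge> w0 / 28"
proof -
  have "integral {0..w0} (\<lambda>w. sin (\<omega> * w\<^sup>2)) + integral {w0..W} (\<lambda>w. sin (\<omega> * w\<^sup>2))
      = integral {0..W} (\<lambda>w. sin (\<omega> * w\<^sup>2))"
    using W w0 by (intro Henstock_Kurzweil_Integration.integral_combine integrable_continuous_interval
        continuous_intros) auto
  then show ?thesis
    using integral_sin_square_initial_ge[OF assms(1-3)] integral_sin_square_tail_ge[OF assms] by simp
qed

lemma cos_sin_harmonic_periodic:
  fixes T :: real assumes "T \<noteq> 0"
  shows "cos (real k * (2*pi/T) * (x + T)) = cos (real k * (2*pi/T) * x)"
    and "sin (real k * (2*pi/T) * (x + T)) = sin (real k * (2*pi/T) * x)"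
proof -
  have "real k * (2*pi/T) * (x + T) = real k * (2*pi/T) * x + 2 * real k * pi"
    using assms by (simp add: field_simps)
  then show "cos (real k * (2*pi/T) * (x + T)) = cos (real k * (2*pi/T) * x)"
    and "sin (real k * (2*pi/T) * (x + T)) = sin (real k * (2*pi/T) * x)"
    by (simp_all add: cos_add sin_add)
qed

lemma integral_cos_sin_harmonic_eq_0:
  fixes T :: real assumes T: "T > 0" and k: "k \<ge> 1"
  shows "integral {0..T} (\<lambda>y. cos (real k * (2*pi/T) * y)) = 0"
    and "integral {0..T} (\<lambda>y. sin (real k * (2*pi/T) * y)) = 0"
proof -
  define \<omega> where "\<omega> = real k * (2*pi/T)"
  have \<omega>: "\<omega> > 0" "\<omega> * T = 2 * real k * pi" using T k by (simp_all add: \<omega>_def field_simps)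
  have "((\<lambda>y. cos (\<omega> * y)) has_integral (sin (\<omega> * T) / \<omega> - sin (\<omega> * 0) / \<omega>)) {0..T}"
    by (rule fundamental_theorem_of_calculus)
       (use T \<omega> in \<open>auto intro!: derivative_eq_intros simp flip: has_real_derivative_iff_has_vector_derivative\<close>)
  then show "integral {0..T} (\<lambda>y. cos (\<omega> * y)) = 0" using \<omega> by (simp add: integral_unique)
  have "((\<lambda>y. sin (\<omega> * y)) has_integral (- cos (\<omega> * T) / \<omega> - - cos (\<omega> * 0) / \<omega>)) {0..T}"
    by (rule fundamental_theorem_of_calculus)
       (use T \<omega> in \<open>auto intro!: derivative_eq_intros simp flip: has_real_derivative_iff_has_vector_derivative\<close>)
  then show "integral {0..T} (\<lambda>y. sin (\<omega> * y)) = 0" using \<omega> by (simp add: integral_unique)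
qed

lemma fourier_coeffs_translate:
  fixes p :: "real \<Rightarrow> real" and k :: nat
  assumes T: "T > 0" and pc: "continuous_on UNIV p" and per: "\<And>x. p (x + T) = p x"
  defines "\<omega> \<equiv> real k * (2*pi/T)"
  defines "a \<equiv> integral {0..T} (\<lambda>t. cos (\<omega> * t) * p t)"
  defines "b \<equiv> integral {0..T} (\<lambda>t. sin (\<omega> * t) * p t)"
  shows "integral {0..T} (\<lambda>y. cos (\<omega> * y) * p (y - c)) = cos (\<omega> * c) * a - sin (\<omega> * c) * b"
    and "integral {0..T} (\<lambda>y. sin (\<omega> * y) * p (y - c)) = sin (\<omega> * c) * a + cos (\<omega> * c) * b"
proof -
  have int: "(\<lambda>t. cos (\<omega> * t) * p t) integrable_on {0..T}" "(\<lambda>t. sin (\<omega> * t) * p t) integrable_on {0..T}"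
    by (intro integrable_continuous_interval continuous_intros continuous_on_subset[OF pc], simp)+
  have translate: "integral {0..T} (\<lambda>y. f (\<omega> * y) * p (y - c)) = integral {0..T} (\<lambda>t. f (\<omega> * (t + c)) * p t)"
    if f: "continuous_on UNIV f" "\<And>x. f (\<omega> * (x + T)) = f (\<omega> * x)" for f
  proof -
    have "continuous_on UNIV (\<lambda>t. f (\<omega> * (t + c)) * p t)"
      by (intro continuous_intros continuous_on_compose2[OF f(1)] pc) auto
    moreover have "f (\<omega> * (x + T + c)) * p (x + T) = f (\<omega> * (x + c)) * p x" for x
      using f(2)[of "x + c"] per[of x] by (simp add: algebra_simps)
    ultimately show ?thesis
      using integral_periodic_translate[OF T, of "\<lambda>t. f (\<omega> * (t + c)) * p t" c] by simp
  qed
  have per_cs: "cos (\<omega> * (x + T)) = cos (\<omega> * x)" "sin (\<omega> * (x + T)) = sin (\<omega> * x)" for x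
    using cos_sin_harmonic_periodic[of T k x] T unfolding \<omega>_def by simp_all
  have "integral {0..T} (\<lambda>y. cos (\<omega> * y) * p (y - c)) = integral {0..T} (\<lambda>t. cos (\<omega> * (t + c)) * p t)"
    by (rule translate) (intro continuous_intros, rule per_cs)
  also have "\<dots> = integral {0..T} (\<lambda>t. cos (\<omega> * c) * (cos (\<omega> * t) * p t) - sin (\<omega> * c) * (sin (\<omega> * t) * p t))"
    by (simp add: distrib_left cos_add algebra_simps)
  also have "\<dots> = cos (\<omega> * c) * a - sin (\<omega> * c) * b"
    unfolding a_def b_def by (subst integral_diff) (auto intro: integrable_on_mult_right int)
  finally show "integral {0..T} (\<lambda>y. cos (\<omega> * y) * p (y - c)) = cos (\<omega> * c) * a - sin (\<omega> * c) * b" .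
  have "integral {0..T} (\<lambda>y. sin (\<omega> * y) * p (y - c)) = integral {0..T} (\<lambda>t. sin (\<omega> * (t + c)) * p t)"
    by (rule translate) (intro continuous_intros, rule per_cs)
  also have "\<dots> = integral {0..T} (\<lambda>t. sin (\<omega> * c) * (cos (\<omega> * t) * p t) + cos (\<omega> * c) * (sin (\<omega> * t) * p t))"
    by (simp add: distrib_left sin_add algebra_simps)
  also have "\<dots> = sin (\<omega> * c) * a + cos (\<omega> * c) * b"
    unfolding a_def b_def by (subst integral_add) (auto intro: integrable_on_mult_right int)
  finally show "integral {0..T} (\<lambda>y. sin (\<omega> * y) * p (y - c)) = sin (\<omega> * c) * a + cos (\<omega> * c) * b" .
qed

lemma continuous_on_integral_comp_minus_square:
  fixes p :: "real \<Rightarrow> real"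
  assumes "continuous_on UNIV p"
  shows "continuous_on UNIV (\<lambda>y. integral {0..W} (\<lambda>w. p (y - w\<^sup>2)))"
proof -
  have "continuous_on (UNIV \<times> cbox 0 W) (\<lambda>(y, w). p (y - w\<^sup>2))"
    unfolding case_prod_unfold
    by (intro continuous_intros continuous_on_compose2[OF assms]) auto
  from integral_continuous_on_param[OF this] show ?thesis by simp
qed

lemma integral_swap_comp_minus_square:
  fixes p \<phi> :: "real \<Rightarrow> real"
  assumes "continuous_on UNIV p" and "continuous_on UNIV \<phi>"
  shows "integral {0..T} (\<lambda>y. \<phi> y * integral {0..W} (\<lambda>w. p (y - w\<^sup>2)))
       = integral {0..W} (\<lambda>w. integral {0..T} (\<lambda>y. \<phi> y * p (y - w\<^sup>2)))"
proof -
  have "continuous_on (cbox (0, 0) (T, W)) (\<lambda>(y, w). \<phi> y * p (y - w\<^sup>2))"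
    unfolding case_prod_unfold
    by (intro continuous_intros continuous_on_compose2[OF assms(1)] continuous_on_compose2[OF assms(2)]) auto
  from integral_swap_continuous[OF this] show ?thesis by simp
qed

lemma fresnel_limits:
  fixes \<omega> :: real assumes \<omega>: "\<omega> > 0"
  obtains Fc Fs where "\<And>W. W > 0 \<Longrightarrow> \<bar>integral {0..W} (\<lambda>w. cos (\<omega> * w\<^sup>2)) - Fc\<bar> \<le> 2*pi/\<omega> / W"
    and "\<And>W. W > 0 \<Longrightarrow> \<bar>integral {0..W} (\<lambda>w. sin (\<omega> * w\<^sup>2)) - Fs\<bar> \<le> 2*pi/\<omega> / W"
    and "Fs > 0"
proof -
  define T where "T = 2*pi/\<omega>"
  have T: "T > 0" and \<omega>_eq: "real 1 * (2*pi/T) = \<omega>" using \<omega> by (simp_all add: T_def)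
  have bounded: "\<bar>integral {a..t} p\<bar> \<le> T * 1"
    if "p = (\<lambda>t. cos (\<omega> * t)) \<or> p = (\<lambda>t. - sin (\<omega> * t))" "a \<le> t" for p a t
  proof (rule periodic_mean_zero_integral_bounded[OF T _ _ _ _ \<open>a \<le> t\<close>])
    show "continuous_on UNIV p" using that(1) by (auto intro!: continuous_intros)
    show "p (x + T) = p x" for x
      using that(1) cos_sin_harmonic_periodic[of T 1 x] T unfolding \<omega>_eq by auto
    show "integral {0..T} p = 0"
      using that(1) integral_cos_sin_harmonic_eq_0[OF T, of 1] unfolding \<omega>_eq by auto
  qed (use that(1) in auto)
  have cos_bdd: "\<bar>integral {a..t} (\<lambda>t. cos (\<omega> * t))\<bar> \<le> T * 1" if "a \<le> t" for a t
    using bounded that by blast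
  have sin_bdd: "\<bar>integral {a..t} (\<lambda>t. - sin (\<omega> * t))\<bar> \<le> T * 1" if "a \<le> t" for a t
    using bounded that by blast
  have cs: "continuous_on UNIV (\<lambda>t. cos (\<omega> * t))" "continuous_on UNIV (\<lambda>t. - sin (\<omega> * t))"
    by (intro continuous_intros)+
  obtain Fc where Fc: "\<And>W. W > 0 \<Longrightarrow> \<bar>integral {0..W} (\<lambda>w. cos (\<omega> * (0 - w\<^sup>2))) - Fc\<bar> \<le> T * 1 / W"
    using integral_comp_minus_square_limit[OF cs(1) cos_bdd, where y = 0] by blast
  obtain Fs where Fs: "\<And>W. W > 0 \<Longrightarrow> \<bar>integral {0..W} (\<lambda>w. - sin (\<omega> * (0 - w\<^sup>2))) - Fs\<bar> \<le> T * 1 / W"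
    using integral_comp_minus_square_limit[OF cs(2) sin_bdd, where y = 0] by blast
  define w0 where "w0 = sqrt (1 / (2 * \<omega>))"
  have w0: "w0 > 0" "\<omega> * w0\<^sup>2 = 1/2" using \<omega> by (simp_all add: w0_def)
  define W where "W = max w0 (56 * T / w0)"
  have W: "W > 0" "w0 \<le> W" using w0 by (auto simp: W_def less_max_iff_disj)
  have "T / W \<le> w0 / 56"
    using W w0 T by (simp add: W_def divide_le_eq field_simps max_def split: if_splits)
  moreover have "\<bar>integral {0..W} (\<lambda>w. sin (\<omega> * w\<^sup>2)) - Fs\<bar> \<le> T / W" using Fs[OF W(1)] by simp
  ultimately have "Fs > 0"
    using integral_sin_square_ge[OF \<omega> w0 W(2)] w0 unfolding abs_le_iff by linarith
  show ?thesis
  proof (rule that)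
    show "\<bar>integral {0..W} (\<lambda>w. cos (\<omega> * w\<^sup>2)) - Fc\<bar> \<le> 2*pi/\<omega> / W" if "W > 0" for W
      using Fc[OF that] by (simp add: T_def)
    show "\<bar>integral {0..W} (\<lambda>w. sin (\<omega> * w\<^sup>2)) - Fs\<bar> \<le> 2*pi/\<omega> / W" if "W > 0" for W
      using Fs[OF that] by (simp add: T_def)
  qed (rule \<open>Fs > 0\<close>)
qed

lemma integral_mean_zero_times_near_const_bound:
  fixes g R :: "real \<Rightarrow> real"
  assumes "T \<ge> 0" and gc: "continuous_on {0..T} g" and Rc: "continuous_on {0..T} R"
    and mean: "integral {0..T} g = 0" and g: "\<And>y. \<bar>g y\<bar> \<le> 1"
    and R: "\<And>y. y \<in> {0..T} \<Longrightarrow> \<bar>R y - C\<bar> \<le> e"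
  shows "\<bar>integral {0..T} (\<lambda>y. g y * R y)\<bar> \<le> e * T"
proof -
  have "integral {0..T} (\<lambda>y. g y * R y) = integral {0..T} (\<lambda>y. g y * (R y - C) + C * g y)"
    by (simp add: algebra_simps)
  also have "\<dots> = integral {0..T} (\<lambda>y. g y * (R y - C))"
    using mean by (subst integral_add) (auto intro!: integrable_continuous_interval continuous_intros gc Rc)
  finally have "integral {0..T} (\<lambda>y. g y * R y) = integral {0..T} (\<lambda>y. g y * (R y - C))" .
  moreover have "norm (integral {0..T} (\<lambda>y. g y * (R y - C))) \<le> e * (T - 0)"
  proof (rule integral_bound)
    fix y assume "y \<in> {0..T}"
    then show "norm (g y * (R y - C)) \<le> e"
      using g[of y] R[of y] mult_mono[of "\<bar>g y\<bar>" 1 "\<bar>R y - C\<bar>" e] by (simp add: abs_mult)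
  qed (use assms in \<open>auto intro!: continuous_intros\<close>)
  ultimately show ?thesis by simp
qed

lemma integral_harmonic_times_transform:
  fixes p :: "real \<Rightarrow> real" and k :: nat and W :: real
  assumes T: "T > 0" and pc: "continuous_on UNIV p" and per: "\<And>x. p (x + T) = p x"
  defines "\<omega> \<equiv> real k * (2*pi/T)"
  defines "a \<equiv> integral {0..T} (\<lambda>t. cos (\<omega> * t) * p t)"
  defines "b \<equiv> integral {0..T} (\<lambda>t. sin (\<omega> * t) * p t)"
  defines "C \<equiv> integral {0..W} (\<lambda>w. cos (\<omega> * w\<^sup>2))"
  defines "S \<equiv> integral {0..W} (\<lambda>w. sin (\<omega> * w\<^sup>2))"
  shows "integral {0..T} (\<lambda>y. cos (\<omega> * y) * integral {0..W} (\<lambda>w. p (y - w\<^sup>2))) = a * C - b * S"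
    and "integral {0..T} (\<lambda>y. sin (\<omega> * y) * integral {0..W} (\<lambda>w. p (y - w\<^sup>2))) = a * S + b * C"
proof -
  have int: "(\<lambda>w. cos (\<omega> * w\<^sup>2)) integrable_on {0..W}" "(\<lambda>w. sin (\<omega> * w\<^sup>2)) integrable_on {0..W}"
    by (intro integrable_continuous_interval continuous_intros)+
  note translate = fourier_coeffs_translate[OF T pc per, of k, folded \<omega>_def a_def b_def]
  have "integral {0..T} (\<lambda>y. cos (\<omega> * y) * integral {0..W} (\<lambda>w. p (y - w\<^sup>2)))
      = integral {0..W} (\<lambda>w. integral {0..T} (\<lambda>y. cos (\<omega> * y) * p (y - w\<^sup>2)))"
    by (rule integral_swap_comp_minus_square[OF pc]) (intro continuous_intros)
  also have "\<dots> = integral {0..W} (\<lambda>w. cos (\<omega> * w\<^sup>2) * a - sin (\<omega> * w\<^sup>2) * b)"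
    by (simp only: translate)
  also have "\<dots> = a * C - b * S"
    unfolding C_def S_def by (subst integral_diff) (auto intro!: integrable_continuous_interval continuous_intros simp: mult.commute)
  finally show "integral {0..T} (\<lambda>y. cos (\<omega> * y) * integral {0..W} (\<lambda>w. p (y - w\<^sup>2))) = a * C - b * S" .
  have "integral {0..T} (\<lambda>y. sin (\<omega> * y) * integral {0..W} (\<lambda>w. p (y - w\<^sup>2)))
      = integral {0..W} (\<lambda>w. integral {0..T} (\<lambda>y. sin (\<omega> * y) * p (y - w\<^sup>2)))"
    by (rule integral_swap_comp_minus_square[OF pc]) (intro continuous_intros)
  also have "\<dots> = integral {0..W} (\<lambda>w. sin (\<omega> * w\<^sup>2) * a + cos (\<omega> * w\<^sup>2) * b)"
    by (simp only: translate)
  also have "\<dots> = a * S + b * C"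
    unfolding C_def S_def by (subst integral_add) (auto intro!: integrable_continuous_interval continuous_intros simp: mult.commute)
  finally show "integral {0..T} (\<lambda>y. sin (\<omega> * y) * integral {0..W} (\<lambda>w. p (y - w\<^sup>2))) = a * S + b * C" .
qed

lemma linear_combination_limit_eq_0:
  fixes u v :: "real \<Rightarrow> real"
  assumes u: "\<And>W. W > 0 \<Longrightarrow> \<bar>u W - x\<bar> \<le> K / W" and v: "\<And>W. W > 0 \<Longrightarrow> \<bar>v W - y\<bar> \<le> K / W"
    and uv: "\<And>W. W > 0 \<Longrightarrow> \<bar>a * u W + b * v W\<bar> \<le> K' / W"
  shows "a * x + b * y = 0"
proof (rule eq_0_if_abs_le_divide_all_pos)
  fix W :: real assume W: "W > 0"
  have "\<bar>a * x + b * y\<bar> \<le> \<bar>a * u W + b * v W\<bar> + \<bar>a\<bar> * \<bar>u W - x\<bar> + \<bar>b\<bar> * \<bar>v W - y\<bar>"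
    by (simp add: abs_mult[symmetric] algebra_simps)
  also have "\<dots> \<le> K' / W + \<bar>a\<bar> * (K / W) + \<bar>b\<bar> * (K / W)"
    by (intro add_mono uv[OF W] mult_left_mono u[OF W] v[OF W]) auto
  finally show "\<bar>a * x + b * y\<bar> \<le> (K' + \<bar>a\<bar> * K + \<bar>b\<bar> * K) / W"
    by (simp add: add_divide_distrib)
qed

text \<open>If the truncated transforms \<open>\<integral>\<^sub>0\<^sup>W p (y - w\<^sup>2) dw\<close> tend to a constant uniformly in \<open>y\<close>,
  every harmonic of \<open>p\<close> vanishes: by the previous identity its coefficient pair, rotated by the
  Fresnel integrals \<open>(Fc, Fs)\<close>, vanishes, and \<open>Fs > 0\<close>.\<close>

lemma fourier_coeffs_eq_0_if_transform_tends_const: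
  fixes p :: "real \<Rightarrow> real" and k :: nat
  assumes T: "T > 0" and pc: "continuous_on UNIV p" and per: "\<And>x. p (x + T) = p x"
    and lim: "\<And>W y. W > 0 \<Longrightarrow> y \<in> {0..T} \<Longrightarrow> \<bar>integral {0..W} (\<lambda>w. p (y - w\<^sup>2)) - C\<bar> \<le> B / W"
    and k: "k \<ge> 1"
  shows "integral {0..T} (\<lambda>x. cos (real k * (2*pi/T) * x) * p x) = 0"
    and "integral {0..T} (\<lambda>x. sin (real k * (2*pi/T) * x) * p x) = 0"
proof -
  define \<omega> where "\<omega> = real k * (2*pi/T)"
  have \<omega>: "\<omega> > 0" using T k by (simp add: \<omega>_def)
  define a where "a = integral {0..T} (\<lambda>t. cos (\<omega> * t) * p t)"
  define b where "b = integral {0..T} (\<lambda>t. sin (\<omega> * t) * p t)"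
  define Cf where "Cf W = integral {0..W} (\<lambda>w. cos (\<omega> * w\<^sup>2))" for W
  define Sf where "Sf W = integral {0..W} (\<lambda>w. sin (\<omega> * w\<^sup>2))" for W
  obtain Fc Fs where Fc: "\<And>W. W > 0 \<Longrightarrow> \<bar>Cf W - Fc\<bar> \<le> 2*pi/\<omega> / W"
    and Fs: "\<And>W. W > 0 \<Longrightarrow> \<bar>Sf W - Fs\<bar> \<le> 2*pi/\<omega> / W" and "Fs > 0"
    using fresnel_limits[OF \<omega>] unfolding Cf_def Sf_def by blast
  have bound: "\<bar>integral {0..T} (\<lambda>y. g (\<omega> * y) * integral {0..W} (\<lambda>w. p (y - w\<^sup>2)))\<bar> \<le> B / W * T"
    if W: "W > 0" and g: "g = cos \<or> g = sin" for g W
  proof (rule integral_mean_zero_times_near_const_bound)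
    show "continuous_on {0..T} (\<lambda>y. g (\<omega> * y))" using g by (auto intro!: continuous_intros)
    show "continuous_on {0..T} (\<lambda>y. integral {0..W} (\<lambda>w. p (y - w\<^sup>2)))"
      using continuous_on_integral_comp_minus_square[OF pc] by (rule continuous_on_subset) simp
    show "integral {0..T} (\<lambda>y. g (\<omega> * y)) = 0"
      using g integral_cos_sin_harmonic_eq_0[OF T k] unfolding \<omega>_def by auto
    show "\<bar>g (\<omega> * y)\<bar> \<le> 1" for y using g by auto
  qed (use T lim[OF W] in auto)
  have "\<bar>a * Cf W + (- b) * Sf W\<bar> \<le> B * T / W" "\<bar>a * Sf W + b * Cf W\<bar> \<le> B * T / W" if "W > 0" for W
    using bound[OF that, of cos] bound[OF that, of sin]
      integral_harmonic_times_transform[OF T pc per, of k W, folded \<omega>_def a_def b_def Cf_def Sf_def]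
    by simp_all
  note approx = this
  have "a * Fc + (- b) * Fs = 0"
    by (rule linear_combination_limit_eq_0[OF Fc Fs approx(1)])
  moreover have "a * Fs + b * Fc = 0"
    by (rule linear_combination_limit_eq_0[OF Fs Fc approx(2)])
  moreover have "a * (Fc\<^sup>2 + Fs\<^sup>2) = Fc * (a * Fc + (- b) * Fs) + Fs * (a * Fs + b * Fc)"
    and "b * (Fc\<^sup>2 + Fs\<^sup>2) = Fc * (a * Fs + b * Fc) - Fs * (a * Fc + (- b) * Fs)"
    by (simp_all add: algebra_simps power2_eq_square)
  moreover have "Fc\<^sup>2 + Fs\<^sup>2 > 0" using \<open>Fs > 0\<close> by (simp add: add_nonneg_pos)
  ultimately have "a = 0" "b = 0" using \<open>Fs > 0\<close> by simp_all
  then show "integral {0..T} (\<lambda>x. cos (real k * (2*pi/T) * x) * p x) = 0"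
    and "integral {0..T} (\<lambda>x. sin (real k * (2*pi/T) * x) * p x) = 0"
    unfolding a_def b_def \<omega>_def by simp_all
qed

section \<open>Periodic functions with increasing Abel transform\<close>

text \<open>Half the classical Abel transform \<open>\<integral>\<^sub>0\<^sup>X h u / \<surd>(X - u) du\<close>, after the substitution
  \<open>u = X - w\<^sup>2\<close>.\<close>

definition abel_transform :: "(real \<Rightarrow> real) \<Rightarrow> real \<Rightarrow> real" where
  "abel_transform h X = integral {0..sqrt X} (\<lambda>w. h (X - w\<^sup>2))"

lemma abel_transform_plus_periods:
  fixes h :: "real \<Rightarrow> real"
  assumes hc: "continuous_on UNIV h" and per: "\<And>x. h (x + T) = h x" and X: "y + real N * T \<ge> 0"
  shows "abel_transform h (y + real N * T)
       = m * sqrt (y + real N * T) + integral {0..sqrt (y + real N * T)} (\<lambda>w. h (y - w\<^sup>2) - m)"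
proof -
  have "h (y + real N * T - w\<^sup>2) = m + (h (y - w\<^sup>2) - m)" for w
    using periodic_plus_of_int[of h T "y - w\<^sup>2" "int N", OF per] by (simp add: algebra_simps)
  then have "abel_transform h (y + real N * T) = integral {0..sqrt (y + real N * T)} (\<lambda>w. m + (h (y - w\<^sup>2) - m))"
    by (simp add: abel_transform_def)
  also have "\<dots> = m * sqrt (y + real N * T) + integral {0..sqrt (y + real N * T)} (\<lambda>w. h (y - w\<^sup>2) - m)"
    using X by (subst integral_add) (auto intro!: integrable_continuous_interval continuous_intros
        continuous_on_compose2[OF hc])
  finally show ?thesis .
qed

lemma real_sqrt_diff_le:
  fixes X Y :: real assumes "0 < X" "X \<le> Y"
  shows "sqrt Y - sqrt X \<le> (Y - X) / sqrt X"
proof -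
  have "(sqrt Y - sqrt X) * sqrt X \<le> (sqrt Y - sqrt X) * (sqrt Y + sqrt X)"
    using assms by (intro mult_left_mono) auto
  also have "\<dots> = Y - X" using assms by (simp add: algebra_simps)
  finally show ?thesis using assms by (simp add: pos_le_divide_eq)
qed

lemma le_if_le_plus_divide_sqrt_nat:
  fixes a b K T :: real
  assumes T: "T > 0" and le: "\<And>N::nat. N \<ge> 1 \<Longrightarrow> a \<le> b + K / sqrt (real N * T)"
  shows "a \<le> b"
proof (rule LIMSEQ_le_const)
  have "filterlim (\<lambda>N::nat. sqrt (real N * T)) at_top sequentially"
    by (rule filterlim_compose[OF sqrt_at_top filterlim_at_top_mult_tendsto_pos[OF tendsto_const T
          filterlim_real_sequentially]])
  then have "(\<lambda>N::nat. K / sqrt (real N * T)) \<longlonglongrightarrow> 0"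
    by (intro tendsto_divide_0[OF tendsto_const] filterlim_at_top_imp_at_infinity)
  then show "(\<lambda>N::nat. b + K / sqrt (real N * T)) \<longlonglongrightarrow> b"
    using tendsto_add[OF tendsto_const[of b]] by fastforce
qed (use le in blast)

text \<open>Monotonicity of the Abel transform passes to the limits \<open>L y\<close> of the truncated transforms of
  \<open>h - m\<close>: compare \<open>X = y + N T\<close> and \<open>X' = y' + N T\<close>, where \<open>m \<surd>X' - m \<surd>X = O(1 / \<surd>N)\<close>.\<close>

lemma abel_transform_mono_imp_limit_mono:
  fixes h L :: "real \<Rightarrow> real"
  assumes T: "T > 0" and hc: "continuous_on UNIV h" and per: "\<And>x. h (x + T) = h x"
    and mono: "mono_on {0..} (abel_transform h)"
    and L: "\<And>W y. W > 0 \<Longrightarrow> \<bar>integral {0..W} (\<lambda>w. h (y - w\<^sup>2) - m) - L y\<bar> \<le> B / W"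
    and y: "0 \<le> y" "y \<le> y'" "y' \<le> T"
  shows "L y \<le> L y'"
proof (rule le_if_le_plus_divide_sqrt_nat[OF T])
  fix N :: nat assume N: "N \<ge> 1"
  define R where "R W z = integral {0..W} (\<lambda>w. h (z - w\<^sup>2) - m)" for W z
  define s where "s = sqrt (y + real N * T)"
  define s' where "s' = sqrt (y' + real N * T)"
  have NT: "real N * T > 0" using N T by simp
  have s: "sqrt (real N * T) \<le> s" "s \<le> s'" using y by (simp_all add: s_def s'_def)
  then have s_pos: "s > 0" using NT by (smt (verit) real_sqrt_gt_zero)
  have B: "B \<ge> 0" using L[of 1 y] by simp
  have "m * s + R s y \<le> m * s' + R s' y'"
    using mono_onD[OF mono, of "y + real N * T" "y' + real N * T"] y T NT
      abel_transform_plus_periods[OF hc per, of y N m] abel_transform_plus_periods[OF hc per, of y' N m]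
    by (simp add: s_def s'_def R_def)
  moreover have "m * s' \<le> m * s + \<bar>m\<bar> * T / sqrt (real N * T)"
  proof -
    have "s' - s \<le> (y' - y) / s"
      using real_sqrt_diff_le[of "y + real N * T" "y' + real N * T"] y NT by (simp add: s_def s'_def)
    also have "\<dots> \<le> T / s" using y s_pos by (intro divide_right_mono) auto
    also have "\<dots> \<le> T / sqrt (real N * T)" using s s_pos NT T by (intro divide_left_mono) auto
    finally have "\<bar>m\<bar> * (s' - s) \<le> \<bar>m\<bar> * (T / sqrt (real N * T))"
      by (rule mult_left_mono) simp
    then have "\<bar>m * (s' - s)\<bar> \<le> \<bar>m\<bar> * (T / sqrt (real N * T))"
      using s by (simp add: abs_mult)
    then show ?thesis by (simp add: right_diff_distrib abs_le_iff)
  qed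
  moreover have "B / s \<le> B / sqrt (real N * T)" "B / s' \<le> B / sqrt (real N * T)"
    using s s_pos NT B by (auto intro!: divide_left_mono)
  moreover have "\<bar>R s y - L y\<bar> \<le> B / s" "\<bar>R s' y' - L y'\<bar> \<le> B / s'"
    unfolding R_def using L s_pos s by auto
  ultimately have "L y \<le> L y' + (B / sqrt (real N * T) + B / sqrt (real N * T) + \<bar>m\<bar> * T / sqrt (real N * T))"
    unfolding abs_le_iff by linarith
  then show "L y \<le> L y' + (2 * B + \<bar>m\<bar> * T) / sqrt (real N * T)"
    by (simp add: add_divide_distrib)
qed

lemma periodic_eq_0_if_transform_tends_const:
  fixes p :: "real \<Rightarrow> real"
  assumes T: "T > 0" and pc: "continuous_on UNIV p" and per: "\<And>x. p (x + T) = p x"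
    and mean: "integral {0..T} p = 0"
    and lim: "\<And>W y. W > 0 \<Longrightarrow> y \<in> {0..T} \<Longrightarrow> \<bar>integral {0..W} (\<lambda>w. p (y - w\<^sup>2)) - C\<bar> \<le> B / W"
  shows "p x = 0"
proof (rule periodic_eq_0_if_fourier_coeffs_eq_0[OF T pc per])
  fix k :: nat
  show "integral {0..T} (\<lambda>x. cos (real k * (2*pi/T) * x) * p x) = 0"
    using mean fourier_coeffs_eq_0_if_transform_tends_const(1)[OF T pc per lim, of k] by (cases "k = 0") simp_all
  show "integral {0..T} (\<lambda>x. sin (real k * (2*pi/T) * x) * p x) = 0"
    using fourier_coeffs_eq_0_if_transform_tends_const(2)[OF T pc per lim, of k] by (cases "k = 0") simp_all
qed

lemma periodic_transform_limit:
  fixes p :: "real \<Rightarrow> real"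
  assumes T: "T > 0" and pc: "continuous_on UNIV p" and per: "\<And>x. p (x + T) = p x"
    and mean: "integral {0..T} p = 0"
  obtains L B where "\<And>y W. W > 0 \<Longrightarrow> \<bar>integral {0..W} (\<lambda>w. p (y - w\<^sup>2)) - L y\<bar> \<le> B / W"
    and "L T = L 0"
proof -
  obtain M where "\<And>x. \<bar>p x\<bar> \<le> M" using periodic_bounded[OF T pc per] by blast
  then have bounded: "\<bar>integral {a..t} p\<bar> \<le> T * M" if "a \<le> t" for a t
    using periodic_mean_zero_integral_bounded[OF T pc per mean _ that] by blast
  have "\<exists>L. \<forall>W>0. \<bar>integral {0..W} (\<lambda>w. p (y - w\<^sup>2)) - L\<bar> \<le> T * M / W" for y
    using integral_comp_minus_square_limit[OF pc bounded, of y] by blast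
  then obtain L where L: "\<And>y W. W > 0 \<Longrightarrow> \<bar>integral {0..W} (\<lambda>w. p (y - w\<^sup>2)) - L y\<bar> \<le> T * M / W"
    using choice[of "\<lambda>y L. \<forall>W>0. \<bar>integral {0..W} (\<lambda>w. p (y - w\<^sup>2)) - L\<bar> \<le> T * M / W"] by blast
  have "L T - L 0 = 0"
  proof (rule eq_0_if_abs_le_divide_all_pos)
    fix W :: real assume "W > 0"
    have "p (T - w\<^sup>2) = p (0 - w\<^sup>2)" for w using per[of "0 - w\<^sup>2"] by (simp add: algebra_simps)
    then have "L T - L 0 = (integral {0..W} (\<lambda>w. p (0 - w\<^sup>2)) - L 0) - (integral {0..W} (\<lambda>w. p (T - w\<^sup>2)) - L T)"
      by simp
    also have "\<bar>\<dots>\<bar> \<le> T * M / W + T * M / W"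
      using L[OF \<open>W > 0\<close>, of 0] L[OF \<open>W > 0\<close>, of T] by (rule order_trans[OF abs_triangle_ineq4 add_mono])
    finally show "\<bar>L T - L 0\<bar> \<le> (T * M + T * M) / W" by (simp add: add_divide_distrib)
  qed
  show ?thesis
  proof (rule that)
    show "\<bar>integral {0..W} (\<lambda>w. p (y - w\<^sup>2)) - L y\<bar> \<le> T * M / W" if "W > 0" for y W using L[OF that] .
    show "L T = L 0" using \<open>L T - L 0 = 0\<close> by simp
  qed
qed

text \<open>Subtract the mean \<open>m\<close>. The truncated transforms of \<open>h - m\<close> converge to a function \<open>L\<close> with
  \<open>L 0 = L T\<close> which is monotone on \<open>[0, T]\<close>, hence constant there.\<close>

theorem periodic_const_if_abel_transform_mono:
  fixes h :: "real \<Rightarrow> real"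
  assumes T: "T > 0" and hc: "continuous_on UNIV h" and per: "\<And>x. h (x + T) = h x"
    and mono: "mono_on {0..} (abel_transform h)"
  shows "h x = h 0"
proof -
  define m where "m = integral {0..T} h / T"
  define p where "p x = h x - m" for x
  have pc: "continuous_on UNIV p" unfolding p_def by (intro continuous_intros hc)
  have pper: "p (x + T) = p x" for x unfolding p_def using per by simp
  have mean: "integral {0..T} p = 0"
    using T unfolding p_def m_def
    by (subst integral_diff) (auto intro!: integrable_continuous_interval continuous_on_subset[OF hc])
  obtain L B where L: "\<And>y W. W > 0 \<Longrightarrow> \<bar>integral {0..W} (\<lambda>w. p (y - w\<^sup>2)) - L y\<bar> \<le> B / W"
    and "L T = L 0"
    using periodic_transform_limit[OF T pc pper mean] by blast
  have L_mono: "L y \<le> L y'" if "0 \<le> y" "y \<le> y'" "y' \<le> T" for y y'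
    by (rule abel_transform_mono_imp_limit_mono[OF T hc per mono L[unfolded p_def] that])
  have L_const: "L y = L 0" if "y \<in> {0..T}" for y
  proof -
    have "L 0 \<le> L y" "L y \<le> L T" by (rule L_mono; use that T in simp)+
    then show ?thesis using \<open>L T = L 0\<close> by linarith
  qed
  have near: "\<bar>integral {0..W} (\<lambda>w. p (y - w\<^sup>2)) - L 0\<bar> \<le> B / W" if "W > 0" "y \<in> {0..T}" for W y
    using L[OF that(1), of y] L_const[OF that(2)] by simp
  have "p z = 0" for z by (rule periodic_eq_0_if_transform_tends_const[OF T pc pper mean near])
  then show ?thesis unfolding p_def by (metis eq_iff_diff_eq_0)
qed

section \<open>The Abel transform of \<open>A f\<close>\<close>

definition wallis_integral :: "nat \<Rightarrow> real" where
  "wallis_integral n = integral {0..pi/2} (\<lambda>s. sin s ^ (2*n))"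

lemma wallis_integral_Suc: "(2 * real n + 2) * wallis_integral (Suc n) = (2 * real n + 1) * wallis_integral n"
proof -
  define F where "F s = - cos s * sin s ^ (2*n+1)" for s :: real
  have "((\<lambda>s. (2 * real n + 2) * sin s ^ (2 * Suc n) - (2 * real n + 1) * sin s ^ (2*n)) has_integral
      (F (pi/2) - F 0)) {0..pi/2}"
  proof (rule fundamental_theorem_of_calculus)
    fix s assume "s \<in> {0..pi/2}"
    have "(F has_real_derivative (sin s * sin s ^ (2*n+1) - cos s * (real (2*n+1) * sin s ^ (2*n) * cos s)))
        (at s within {0..pi/2})"
      unfolding F_def by (auto intro!: derivative_eq_intros simp del: power_Suc)
    moreover have e1: "sin s * sin s ^ (2*n+1) = sin s ^ (2*n) * (sin s)\<^sup>2"
      and e2: "sin s ^ (2 * Suc n) = sin s ^ (2*n) * (sin s)\<^sup>2"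
      by (simp_all add: power_add power2_eq_square)
    have e3: "cos s * (real (2*n+1) * sin s ^ (2*n) * cos s) = real (2*n+1) * sin s ^ (2*n) * (1 - (sin s)\<^sup>2)"
      using cos_squared_eq[of s] by (simp add: power2_eq_square)
    have "sin s * sin s ^ (2*n+1) - cos s * (real (2*n+1) * sin s ^ (2*n) * cos s)
        = (2 * real n + 2) * sin s ^ (2 * Suc n) - (2 * real n + 1) * sin s ^ (2*n)"
      unfolding e1 e2 e3 by (simp add: algebra_simps)
    ultimately show "(F has_vector_derivative ((2 * real n + 2) * sin s ^ (2 * Suc n) - (2 * real n + 1) * sin s ^ (2*n)))
        (at s within {0..pi/2})"
      by (simp add: has_real_derivative_iff_has_vector_derivative[symmetric])
  qed simp
  moreover have "F (pi/2) - F 0 = 0" unfolding F_def by simp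
  ultimately have "integral {0..pi/2} (\<lambda>s. (2 * real n + 2) * sin s ^ (2 * Suc n) - (2 * real n + 1) * sin s ^ (2*n)) = 0"
    by (simp add: integral_unique)
  moreover have "integral {0..pi/2} (\<lambda>s. (2 * real n + 2) * sin s ^ (2 * Suc n) - (2 * real n + 1) * sin s ^ (2*n))
      = (2 * real n + 2) * wallis_integral (Suc n) - (2 * real n + 1) * wallis_integral n"
    unfolding wallis_integral_def
    by (subst integral_diff) (auto intro!: integrable_continuous_interval continuous_intros)
  ultimately show ?thesis by simp
qed

lemma integral_power_minus_square_Suc:
  fixes X :: real assumes X: "X \<ge> 0"
  shows "(2 * real n + 3) * integral {0..sqrt X} (\<lambda>w. (X - w\<^sup>2) ^ Suc n)
       = (2 * real n + 2) * X * integral {0..sqrt X} (\<lambda>w. (X - w\<^sup>2) ^ n)"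
proof -
  define G where "G w = w * (X - w\<^sup>2) ^ Suc n" for w :: real
  have "((\<lambda>w. (2 * real n + 3) * (X - w\<^sup>2) ^ Suc n - (2 * real n + 2) * X * (X - w\<^sup>2) ^ n) has_integral
      (G (sqrt X) - G 0)) {0..sqrt X}"
  proof (rule fundamental_theorem_of_calculus)
    fix w assume "w \<in> {0..sqrt X}"
    have "(G has_real_derivative ((X - w\<^sup>2) ^ Suc n + w * (real (Suc n) * (X - w\<^sup>2) ^ n * (- (2 * w)))))
        (at w within {0..sqrt X})"
      unfolding G_def by (auto intro!: derivative_eq_intros simp del: power_Suc)
    moreover have "(X - w\<^sup>2) ^ Suc n + w * (real (Suc n) * (X - w\<^sup>2) ^ n * (- (2 * w)))
        = (2 * real n + 3) * (X - w\<^sup>2) ^ Suc n - (2 * real n + 2) * X * (X - w\<^sup>2) ^ n"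
    proof -
      have "w * (real (Suc n) * (X - w\<^sup>2) ^ n * (- (2 * w))) = (2 * real n + 2) * (X - w\<^sup>2) ^ n * ((X - w\<^sup>2) - X)"
        by (simp add: power2_eq_square algebra_simps)
      then show ?thesis by (simp add: algebra_simps)
    qed
    ultimately show "(G has_vector_derivative ((2 * real n + 3) * (X - w\<^sup>2) ^ Suc n - (2 * real n + 2) * X * (X - w\<^sup>2) ^ n))
        (at w within {0..sqrt X})"
      unfolding has_real_derivative_iff_has_vector_derivative[symmetric] by (rule DERIV_cong)
  qed (use X in simp)
  moreover have "G (sqrt X) - G 0 = 0" unfolding G_def using X by simp
  ultimately have "integral {0..sqrt X} (\<lambda>w. (2 * real n + 3) * (X - w\<^sup>2) ^ Suc n - (2 * real n + 2) * X * (X - w\<^sup>2) ^ n) = 0"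
    by (simp add: integral_unique)
  then show ?thesis
    by (subst (asm) integral_diff) (auto intro!: integrable_continuous_interval continuous_intros)
qed

lemma wallis_integral_times_integral_power_minus_square:
  fixes X :: real assumes X: "X \<ge> 0"
  shows "(2 * real n + 1) * (wallis_integral n * integral {0..sqrt X} (\<lambda>w. (X - w\<^sup>2) ^ n)) = pi/2 * X^n * sqrt X"
proof (induction n)
  case 0 then show ?case using X by (simp add: wallis_integral_def)
next
  case (Suc n)
  have "(2 * real n + 2) * ((2 * real n + 3) * (wallis_integral (Suc n) * integral {0..sqrt X} (\<lambda>w. (X - w\<^sup>2) ^ Suc n)))
      = ((2 * real n + 2) * wallis_integral (Suc n)) * ((2 * real n + 3) * integral {0..sqrt X} (\<lambda>w. (X - w\<^sup>2) ^ Suc n))"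
    by (simp only: mult_ac)
  also have "\<dots> = ((2 * real n + 1) * wallis_integral n) * ((2 * real n + 2) * X * integral {0..sqrt X} (\<lambda>w. (X - w\<^sup>2) ^ n))"
    by (simp only: wallis_integral_Suc integral_power_minus_square_Suc[OF X])
  also have "\<dots> = (2 * real n + 2) * X * ((2 * real n + 1) * (wallis_integral n * integral {0..sqrt X} (\<lambda>w. (X - w\<^sup>2) ^ n)))"
    by (simp only: mult_ac)
  also have "\<dots> = (2 * real n + 2) * (pi/2 * X ^ Suc n * sqrt X)"
    unfolding Suc by (simp add: mult_ac)
  finally have "(2 * real n + 3) * (wallis_integral (Suc n) * integral {0..sqrt X} (\<lambda>w. (X - w\<^sup>2) ^ Suc n))
      = pi/2 * X ^ Suc n * sqrt X"
    unfolding mult_cancel_left by (simp add: add_nonneg_pos)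
  then show ?case by (simp add: algebra_simps)
qed

lemma A_op_power: "A_op (\<lambda>t. t^n) \<theta> = \<theta>^n * wallis_integral n"
proof -
  have "(\<theta> * (sin s)\<^sup>2) ^ n = \<theta>^n * sin s ^ (2*n)" for s
    by (simp add: power_mult_distrib power_mult[symmetric] mult.commute)
  then show ?thesis unfolding A_op_def wallis_integral_def by simp
qed

lemma abel_transform_A_op_power:
  fixes X :: real assumes X: "X \<ge> 0"
  shows "abel_transform (A_op (\<lambda>t. t^n)) X = pi/2 * integral {0..sqrt X} (\<lambda>z. (z\<^sup>2)^n)"
proof -
  have "((\<lambda>z. z^(2*n)) has_integral (sqrt X ^ (2*n+1) / real (2*n+1) - 0 ^ (2*n+1) / real (2*n+1))) {0..sqrt X}"
  proof (rule fundamental_theorem_of_calculus)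
    fix z assume "z \<in> {0..sqrt X}"
    have "((\<lambda>z. z ^ (2*n+1) / real (2*n+1)) has_real_derivative (real (2*n+1) * z ^ (2*n+1 - Suc 0)) / real (2*n+1))
        (at z within {0..sqrt X})"
      by (rule DERIV_cdivide[OF DERIV_pow])
    moreover have "(real (2*n+1) * z ^ (2*n+1 - Suc 0)) / real (2*n+1) = z^(2*n)"
      by (simp del: of_nat_add of_nat_mult)
    ultimately show "((\<lambda>z. z ^ (2*n+1) / real (2*n+1)) has_vector_derivative z^(2*n)) (at z within {0..sqrt X})"
      unfolding has_real_derivative_iff_has_vector_derivative[symmetric] by (rule DERIV_cong)
  qed (use X in simp)
  moreover have "sqrt X ^ (2*n+1) = X^n * sqrt X" using X by (simp add: power_mult)
  ultimately have "(2 * real n + 1) * integral {0..sqrt X} (\<lambda>z. (z\<^sup>2)^n) = X^n * sqrt X"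
    by (simp add: integral_unique power_mult[symmetric] add.commute)
  moreover have "abel_transform (A_op (\<lambda>t. t^n)) X = wallis_integral n * integral {0..sqrt X} (\<lambda>w. (X - w\<^sup>2)^n)"
    by (simp add: abel_transform_def A_op_power mult.commute)
  ultimately have "(2 * real n + 1) * abel_transform (A_op (\<lambda>t. t^n)) X
      = (2 * real n + 1) * (pi/2 * integral {0..sqrt X} (\<lambda>z. (z\<^sup>2)^n))"
    using wallis_integral_times_integral_power_minus_square[OF X, of n] by (simp add: mult_ac)
  then show ?thesis unfolding mult_cancel_left by (simp add: add_nonneg_pos)
qed

lemma abel_transform_A_op_polynomial:
  fixes X :: real assumes X: "X \<ge> 0"
  shows "abel_transform (A_op (\<lambda>x. \<Sum>i\<le>N. a i * x^i)) X = pi/2 * integral {0..sqrt X} (\<lambda>z. \<Sum>i\<le>N. a i * (z\<^sup>2)^i)"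
proof -
  have A: "A_op (\<lambda>x. \<Sum>i\<le>N. a i * x^i) \<theta> = (\<Sum>i\<le>N. a i * A_op (\<lambda>t. t^i) \<theta>)" for \<theta>
    unfolding A_op_def
    by (subst integral_sum) (auto intro!: integrable_continuous_interval continuous_intros)
  have "abel_transform (A_op (\<lambda>x. \<Sum>i\<le>N. a i * x^i)) X = (\<Sum>i\<le>N. a i * abel_transform (A_op (\<lambda>t. t^i)) X)"
    unfolding abel_transform_def A
    by (subst integral_sum) (auto simp: A_op_power intro!: integrable_continuous_interval continuous_intros)
  also have "\<dots> = pi/2 * (\<Sum>i\<le>N. integral {0..sqrt X} (\<lambda>z. a i * (z\<^sup>2)^i))"
    by (simp add: abel_transform_A_op_power[OF X] sum_distrib_left mult_ac)
  also have "\<dots> = pi/2 * integral {0..sqrt X} (\<lambda>z. \<Sum>i\<le>N. a i * (z\<^sup>2)^i)"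
    by (subst integral_sum) (auto intro!: integrable_continuous_interval continuous_intros)
  finally show ?thesis .
qed

lemma mult_sin_square_mem_interval:
  assumes "(\<theta>::real) \<in> {0..X}"
  shows "\<theta> * (sin s)\<^sup>2 \<in> {0..X}"
proof -
  have "(sin s)\<^sup>2 \<le> 1" using abs_sin_le_one[of s] by (simp add: abs_square_le_1)
  then have "\<theta> * (sin s)\<^sup>2 \<le> \<theta>" using assms by (auto intro!: mult_right_le_one_le)
  then show ?thesis using assms by auto
qed

lemma continuous_on_A_op:
  assumes "continuous_on {0..X} f"
  shows "continuous_on {0..X} (A_op f)"
proof -
  have "continuous_on ({0..X} \<times> cbox 0 (pi/2)) (\<lambda>(\<theta>, s). f (\<theta> * (sin s)\<^sup>2))"
    unfolding case_prod_unfold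
    by (rule continuous_on_compose2[OF assms]) (auto intro!: continuous_intros intro: mult_sin_square_mem_interval)
  from integral_continuous_on_param[OF this] show ?thesis unfolding A_op_def by simp
qed

lemma abs_A_op_diff_le:
  assumes fc: "continuous_on {0..X} f" and gc: "continuous_on {0..X} g"
    and close: "\<And>x. x \<in> {0..X} \<Longrightarrow> \<bar>f x - g x\<bar> \<le> e" and \<theta>: "\<theta> \<in> {0..X}"
  shows "\<bar>A_op f \<theta> - A_op g \<theta>\<bar> \<le> e * (pi/2)"
proof -
  have c: "continuous_on {0..pi/2} (\<lambda>s. h (\<theta> * (sin s)\<^sup>2))" if "continuous_on {0..X} h" for h
    by (rule continuous_on_compose2[OF that]) (auto intro!: continuous_intros mult_sin_square_mem_interval[OF \<theta>])
  have "A_op f \<theta> - A_op g \<theta> = integral {0..pi/2} (\<lambda>s. f (\<theta> * (sin s)\<^sup>2) - g (\<theta> * (sin s)\<^sup>2))"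
    unfolding A_op_def by (rule integral_diff[symmetric]) (auto intro!: integrable_continuous_interval c fc gc)
  also have "norm \<dots> \<le> e * (pi/2 - 0)"
    using close[OF mult_sin_square_mem_interval[OF \<theta>]]
    by (intro integral_bound) (auto intro!: continuous_intros c fc gc)
  finally show ?thesis by simp
qed

lemma minus_square_mem_interval: "w \<in> {0..sqrt X} \<Longrightarrow> X \<ge> 0 \<Longrightarrow> X - w\<^sup>2 \<in> {0..X}"
  and square_mem_interval: "w \<in> {0..sqrt X} \<Longrightarrow> X \<ge> 0 \<Longrightarrow> w\<^sup>2 \<in> {0..X}"
  for w X :: real
  using power_mono[of w "sqrt X" 2] by auto

lemma abel_transform_A_op_diff_le:
  assumes X: "X \<ge> 0" and fc: "continuous_on {0..X} f" and gc: "continuous_on {0..X} g"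
    and close: "\<And>x. x \<in> {0..X} \<Longrightarrow> \<bar>f x - g x\<bar> \<le> e"
  shows "\<bar>abel_transform (A_op f) X - abel_transform (A_op g) X\<bar> \<le> e * (pi/2) * sqrt X"
proof -
  have c: "continuous_on {0..sqrt X} (\<lambda>w. A_op h (X - w\<^sup>2))" if "continuous_on {0..X} h" for h
    by (rule continuous_on_compose2[OF continuous_on_A_op[OF that]])
       (use X in \<open>auto intro!: continuous_intros intro: minus_square_mem_interval\<close>)
  have "abel_transform (A_op f) X - abel_transform (A_op g) X
      = integral {0..sqrt X} (\<lambda>w. A_op f (X - w\<^sup>2) - A_op g (X - w\<^sup>2))"
    unfolding abel_transform_def
    by (rule integral_diff[symmetric]) (auto intro!: integrable_continuous_interval c fc gc)
  also have "norm \<dots> \<le> e * (pi/2) * (sqrt X - 0)"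
    using X abs_A_op_diff_le[OF fc gc close minus_square_mem_interval]
    by (intro integral_bound) (auto intro!: continuous_intros c fc gc)
  finally show ?thesis by simp
qed

text \<open>It holds for polynomials by the Wallis-type computation above, and both sides are
  uniformly continuous in \<open>f\<close>.\<close>

theorem abel_transform_A_op:
  assumes X: "X \<ge> 0" and fc: "continuous_on {0..X} f"
  shows "abel_transform (A_op f) X = pi/2 * integral {0..sqrt X} (\<lambda>z. f (z\<^sup>2))"
proof -
  define D where "D h = abel_transform (A_op h) X - pi/2 * integral {0..sqrt X} (\<lambda>z. h (z\<^sup>2))" for h
  have zc: "continuous_on {0..sqrt X} (\<lambda>z. h (z\<^sup>2))" if "continuous_on {0..X} h" for h
    by (rule continuous_on_compose2[OF that]) (use X in \<open>auto intro!: continuous_intros intro: square_mem_interval\<close>)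
  have "\<bar>D f\<bar> \<le> e * (pi * sqrt X)" if e: "e > 0" for e
  proof -
    obtain g where g: "real_polynomial_function g" "\<And>x. x \<in> {0..X} \<Longrightarrow> \<bar>f x - g x\<bar> < e"
      using Stone_Weierstrass_real_polynomial_function[OF compact_Icc fc e] by blast
    obtain a N where "g = (\<lambda>x. \<Sum>i\<le>N. a i * x^i)"
      using g(1) real_polynomial_function_iff_sum by blast
    then have "D g = 0" unfolding D_def using abel_transform_A_op_polynomial[OF X] by simp
    have gc: "continuous_on {0..X} g"
      using continuous_real_polymonial_function[OF g(1)] by (auto intro: continuous_at_imp_continuous_on)
    have close: "\<And>x. x \<in> {0..X} \<Longrightarrow> \<bar>f x - g x\<bar> \<le> e" using g(2) by (simp add: less_imp_le)
    have "integral {0..sqrt X} (\<lambda>z. f (z\<^sup>2)) - integral {0..sqrt X} (\<lambda>z. g (z\<^sup>2))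
        = integral {0..sqrt X} (\<lambda>z. f (z\<^sup>2) - g (z\<^sup>2))"
      by (rule integral_diff[symmetric]) (auto intro!: integrable_continuous_interval zc fc gc)
    also have "norm \<dots> \<le> e * (sqrt X - 0)"
      using X close[OF square_mem_interval] by (intro integral_bound) (auto intro!: continuous_intros zc fc gc)
    finally have "\<bar>pi/2 * (integral {0..sqrt X} (\<lambda>z. f (z\<^sup>2)) - integral {0..sqrt X} (\<lambda>z. g (z\<^sup>2)))\<bar>
        \<le> pi/2 * (e * sqrt X)"
      by (simp add: abs_mult)
    then have "\<bar>pi/2 * integral {0..sqrt X} (\<lambda>z. f (z\<^sup>2)) - pi/2 * integral {0..sqrt X} (\<lambda>z. g (z\<^sup>2))\<bar>
        \<le> pi/2 * (e * sqrt X)"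
      by (simp only: right_diff_distrib)
    moreover have "pi/2 * (e * sqrt X) = e * (pi * sqrt X) / 2" "e * (pi/2) * sqrt X = e * (pi * sqrt X) / 2"
      by simp_all
    moreover have "\<bar>abel_transform (A_op f) X - abel_transform (A_op g) X\<bar> \<le> e * (pi/2) * sqrt X"
      by (rule abel_transform_A_op_diff_le[OF X fc gc close])
    ultimately show ?thesis using \<open>D g = 0\<close> unfolding D_def abs_le_iff by (intro conjI; linarith)
  qed
  then have "\<bar>D f\<bar> \<le> 0" by (intro le_0_if_le_mult_all_pos[of "pi * sqrt X"]) (use X in auto)
  then show ?thesis unfolding D_def by simp
qed

lemma A_op_ge_divide_sqrt:
  assumes \<theta>: "\<theta> \<ge> 1" and fc: "continuous_on {0..\<theta>} f"
    and nonneg: "\<And>x. x \<in> {0..\<theta>} \<Longrightarrow> f x \<ge> 0" and m: "\<And>x. x \<in> {0..1} \<Longrightarrow> f x \<ge> m"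
  shows "A_op f \<theta> \<ge> m / sqrt \<theta>"
proof -
  define \<delta> where "\<delta> = 1 / sqrt \<theta>"
  have \<delta>: "0 < \<delta>" "\<delta> \<le> 1" using \<theta> by (auto simp: \<delta>_def)
  then have "\<delta> \<le> pi/2" using pi_gt3 by linarith
  have c: "continuous_on {0..pi/2} (\<lambda>s. f (\<theta> * (sin s)\<^sup>2))"
    by (rule continuous_on_compose2[OF fc]) (use \<theta> in \<open>auto intro!: continuous_intros intro: mult_sin_square_mem_interval\<close>)
  have int: "(\<lambda>s. f (\<theta> * (sin s)\<^sup>2)) integrable_on {0..\<delta>}"
    by (rule integrable_continuous_interval, rule continuous_on_subset[OF c]) (use \<open>\<delta> \<le> pi/2\<close> in auto)
  have "m / sqrt \<theta> = integral {0..\<delta>} (\<lambda>s. m)" using \<delta> by (simp add: \<delta>_def)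
  also have "\<dots> \<le> integral {0..\<delta>} (\<lambda>s. f (\<theta> * (sin s)\<^sup>2))"
  proof (rule integral_le[OF _ int])
    fix s assume s: "s \<in> {0..\<delta>}"
    have "0 \<le> sin s" "sin s \<le> \<delta>" using s \<delta> sin_x_le_x[of s] pi_gt3 by (auto intro!: sin_ge_zero)
    then have "(sin s)\<^sup>2 \<le> 1 / \<theta>" using power_mono[of "sin s" \<delta> 2] \<theta> by (simp add: \<delta>_def power_divide)
    then have "\<theta> * (sin s)\<^sup>2 \<in> {0..1}" using \<theta> by (simp add: field_simps)
    then show "m \<le> f (\<theta> * (sin s)\<^sup>2)" by (rule m)
  qed (rule integrable_const_ivl)
  also have "\<dots> \<le> A_op f \<theta>"
    unfolding A_op_def using \<delta> \<open>\<delta> \<le> pi/2\<close> \<theta>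
    by (intro integral_subset_le int integrable_continuous_interval c)
       (auto intro!: nonneg intro: mult_sin_square_mem_interval)
  finally show ?thesis .
qed

lemma A_op_lower_bound:
  assumes fc: "continuous_on {0..} f" and pos: "\<And>x. x \<ge> 0 \<Longrightarrow> f x > 0"
  obtains m where "m > 0" "\<And>\<theta>. \<theta> \<ge> 1 \<Longrightarrow> A_op f \<theta> \<ge> m / sqrt \<theta>"
proof -
  have "continuous_on {0..1} f" using fc by (rule continuous_on_subset) auto
  then obtain z where z: "z \<in> {0..1}" "\<And>y. y \<in> {0..1} \<Longrightarrow> f z \<le> f y"
    using continuous_attains_inf[of "{0..1::real}" f] by auto
  show ?thesis
  proof (rule that)
    show "f z > 0" using pos z(1) by simp
    show "A_op f \<theta> \<ge> f z / sqrt \<theta>" if "\<theta> \<ge> 1" for \<theta>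
      using that z pos by (intro A_op_ge_divide_sqrt continuous_on_subset[OF fc]) (auto intro: less_imp_le)
  qed
qed

lemma abel_transform_A_op_mono:
  assumes fc: "continuous_on {0..} f" and nonneg: "\<And>x. x \<ge> 0 \<Longrightarrow> f x \<ge> 0"
  shows "mono_on {0..} (abel_transform (A_op f))"
proof (rule mono_onI)
  fix X Y :: real assume XY: "X \<in> {0..}" "Y \<in> {0..}" "X \<le> Y"
  have fc2: "continuous_on {0..sqrt Y} (\<lambda>z. f (z\<^sup>2))"
    by (rule continuous_on_compose2[OF fc]) (auto intro!: continuous_intros)
  have "integral {0..sqrt X} (\<lambda>z. f (z\<^sup>2)) \<le> integral {0..sqrt Y} (\<lambda>z. f (z\<^sup>2))"
    using XY nonneg
    by (intro integral_subset_le integrable_continuous_interval fc2 continuous_on_subset[OF fc2]) auto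
  then show "abel_transform (A_op f) X \<le> abel_transform (A_op f) Y"
    using XY by (simp add: abel_transform_A_op continuous_on_subset[OF fc])
qed

text \<open>If \<open>A f\<close> is constant then so is \<open>F y = \<integral>\<^sub>0\<^sup>y f (z\<^sup>2) dz / y\<close>, by the Abel identity;
  differentiating \<open>F\<close> recovers \<open>f\<close>.\<close>

lemma eq_const_if_A_op_const:
  assumes fc: "continuous_on {0..} f" and A: "\<And>x. x \<ge> 0 \<Longrightarrow> A_op f x = c" and x: "x > 0"
  shows "f x = 2 * c / pi"
proof -
  define F where "F y = integral {0..y} (\<lambda>z. f (z\<^sup>2))" for y
  have F: "F y = 2 * c / pi * y" if "y \<ge> 0" for y
  proof -
    have "pi/2 * F y = abel_transform (A_op f) (y\<^sup>2)"
      using abel_transform_A_op[of "y\<^sup>2" f] that continuous_on_subset[OF fc] by (simp add: F_def)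
    also have "\<dots> = integral {0..y} (\<lambda>w. A_op f (y\<^sup>2 - w\<^sup>2))"
      using that by (simp add: abel_transform_def)
    also have "\<dots> = integral {0..y} (\<lambda>w. c)"
      by (rule integral_cong) (use that in \<open>auto intro!: A power_mono\<close>)
    finally show ?thesis using that by (simp add: field_simps)
  qed
  define y where "y = sqrt x"
  have y: "y > 0" using x by (simp add: y_def)
  have "(F has_real_derivative f (y\<^sup>2)) (at y within {0..y+1})"
    unfolding F_def has_real_derivative_iff_has_vector_derivative
    by (rule integral_has_vector_derivative) (use y in \<open>auto intro!: continuous_intros continuous_on_compose2[OF fc]\<close>)
  then have "(F has_real_derivative f (y\<^sup>2)) (at y)" using at_within_Icc_at[of 0 y "y+1"] y by simp
  moreover have "(F has_real_derivative 2 * c / pi) (at y)"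
    by (rule has_field_derivative_transform_within_open[where S = "{0<..}", of "\<lambda>y. 2 * c / pi * y"])
       (use y F in \<open>auto intro!: derivative_eq_intros\<close>)
  ultimately have "f (y\<^sup>2) = 2 * c / pi" by (rule DERIV_unique)
  then show ?thesis using x by (simp add: y_def)
qed

lemma power_times_sqrt_linear_tendsto_0:
  fixes q a b :: real
  assumes q: "0 < q" "q < 1" and "a \<ge> 0" "b \<ge> 0"
  shows "(\<lambda>n. q^n * sqrt (a + real n * b)) \<longlonglongrightarrow> 0"
proof (rule tendsto_sandwich[of "\<lambda>_. 0" _ _ "\<lambda>n. (1 + a) * q^n + b * (real n * q^n)"])
  have "sqrt x \<le> 1 + x" if "x \<ge> 0" for x :: real
  proof -
    have "x \<le> (1 + x)\<^sup>2" using that by (simp add: power2_eq_square algebra_simps)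
    then show ?thesis using real_sqrt_le_mono[of x "(1 + x)\<^sup>2"] that by simp
  qed
  then have "sqrt (a + real n * b) \<le> 1 + (a + real n * b)" for n using assms by simp
  then have "q^n * sqrt (a + real n * b) \<le> q^n * (1 + (a + real n * b))" for n
    using q by (intro mult_left_mono) auto
  then have "q^n * sqrt (a + real n * b) \<le> (1 + a) * q^n + b * (real n * q^n)" for n
    by (simp add: algebra_simps)
  then show "eventually (\<lambda>n. q^n * sqrt (a + real n * b) \<le> (1 + a) * q^n + b * (real n * q^n)) sequentially"
    by simp
  have "(\<lambda>n. (1 + a) * q^n + b * (real n * q^n)) \<longlonglongrightarrow> (1 + a) * 0 + b * 0"
    using q powser_times_n_limit_0[of q] LIMSEQ_power_zero[of q]
    by (intro tendsto_intros) (auto simp: mult.commute)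
  then show "(\<lambda>n. (1 + a) * q^n + b * (real n * q^n)) \<longlonglongrightarrow> 0" by simp
qed (use assms in auto)

text \<open>Along \<open>1 + n \<tau>\<close> the function equals \<open>\<gamma>\<^sup>n g 1\<close>, which for \<open>\<gamma> < 1\<close> decays faster than
  \<open>m / \<surd>(1 + n \<tau>)\<close>.\<close>

lemma quasi_periodic_factor_ge_1:
  fixes g :: "real \<Rightarrow> real"
  assumes \<tau>: "\<tau> > 0" and qp: "\<And>x. g (x + \<tau>) = \<gamma> * g x"
    and m: "m > 0" and lower: "\<And>\<theta>. \<theta> \<ge> 1 \<Longrightarrow> g \<theta> \<ge> m / sqrt \<theta>"
  shows "\<gamma> \<ge> 1"
proof (rule ccontr)
  assume "\<not> \<gamma> \<ge> 1"
  have iter: "g (x + real n * \<tau>) = \<gamma>^n * g x" for x n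
    by (induction n) (auto simp: algebra_simps qp[of "x + real _ * \<tau>", simplified algebra_simps])
  have pos: "g \<theta> > 0" if "\<theta> \<ge> 1" for \<theta>
    using lower[OF that] m that by (smt (verit) divide_pos_pos real_sqrt_gt_zero)
  have "g 1 > 0" "g (1 + \<tau>) > 0" using pos \<tau> by auto
  then have "\<gamma> > 0" using qp[of 1] by (simp add: zero_less_mult_iff)
  have "m \<le> g 1 * (\<gamma>^n * sqrt (1 + real n * \<tau>))" for n
  proof -
    have n: "1 + real n * \<tau> \<ge> 1" using \<tau> by simp
    have "m / sqrt (1 + real n * \<tau>) \<le> \<gamma>^n * g 1" using lower[OF n] iter[of 1 n] by simp
    then show ?thesis using n by (simp add: divide_le_eq mult_ac)
  qed
  moreover have "(\<lambda>n. g 1 * (\<gamma>^n * sqrt (1 + real n * \<tau>))) \<longlonglongrightarrow> g 1 * 0"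
    using \<open>\<gamma> > 0\<close> \<open>\<not> \<gamma> \<ge> 1\<close> \<tau>
    by (intro tendsto_mult tendsto_const power_times_sqrt_linear_tendsto_0) auto
  ultimately have "m \<le> g 1 * 0" by (intro LIMSEQ_le_const) auto
  then show False using m by simp
qed

text \<open>The reflection \<open>x \<mapsto> g (c - x)\<close> is quasi-periodic with factor \<open>1 / \<gamma>\<close>.\<close>

lemma quasi_periodic_factor_eq_1:
  fixes g :: "real \<Rightarrow> real"
  assumes \<tau>: "\<tau> > 0" and qp: "\<And>x. g (x + \<tau>) = \<gamma> * g x"
    and m: "m > 0" and right: "\<And>\<theta>. \<theta> \<ge> 1 \<Longrightarrow> g \<theta> \<ge> m / sqrt \<theta>"
    and m': "m' > 0" and left: "\<And>\<theta>. \<theta> \<ge> 1 \<Longrightarrow> g (c - \<theta>) \<ge> m' / sqrt \<theta>"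
  shows "\<gamma> = 1"
proof -
  have "\<gamma> \<ge> 1" by (rule quasi_periodic_factor_ge_1[OF \<tau> qp m right])
  moreover have "1 / \<gamma> \<ge> 1"
  proof (rule quasi_periodic_factor_ge_1[OF \<tau> _ m' left])
    show "g (c - (x + \<tau>)) = 1 / \<gamma> * g (c - x)" for x
      using qp[of "c - (x + \<tau>)"] \<open>\<gamma> \<ge> 1\<close> by (simp add: algebra_simps)
  qed
  ultimately show ?thesis by (simp add: field_simps)
qed

lemma real_analytic_on_atLeast_imp_continuous_on:
  assumes "real_analytic_on f {a..}" and "a \<le> b"
  shows "continuous_on {b..} f"
  using real_analytic_on_imp_continuous_on[OF assms(1)] assms(2)
  by (auto intro: continuous_on_subset)

lemma real_analytic_eq_const_if_A_op_const:
  assumes \<epsilon>: "\<epsilon> > 0" and f: "real_analytic_on f {-\<epsilon>..}" and A: "\<And>x. x \<ge> -\<epsilon> \<Longrightarrow> A_op f x = c"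
    and x: "x \<ge> -\<epsilon>"
  shows "f x = 2 * c / pi"
proof (rule real_analytic_on_eq_from_above[OF f real_analytic_on_const, where b = 1])
  show "f y = 2 * c / pi" if "y \<in> {-\<epsilon>..}" "1 \<le> y" for y
    using that \<epsilon> A by (intro eq_const_if_A_op_const real_analytic_on_atLeast_imp_continuous_on[OF f]) auto
qed (use x in auto)

lemma A_op_lower_bound_real_analytic:
  assumes "\<epsilon> > 0" and "real_analytic_on f {-\<epsilon>..}" and "\<forall>x\<ge>-\<epsilon>. f x > 0"
  obtains m where "m > 0" "\<And>\<theta>. \<theta> \<ge> 1 \<Longrightarrow> A_op f \<theta> \<ge> m / sqrt \<theta>"
proof (rule A_op_lower_bound)
  show "continuous_on {0..} f" using assms(1,2) by (intro real_analytic_on_atLeast_imp_continuous_on) auto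
  show "f x > 0" if "x \<ge> 0" for x using assms(1,3) that by simp
qed (rule that)

lemma abel_transform_cong:
  assumes "\<And>x. x \<ge> 0 \<Longrightarrow> g x = h x" and "X \<ge> 0"
  shows "abel_transform g X = abel_transform h X"
  unfolding abel_transform_def using assms minus_square_mem_interval by (intro integral_cong) auto

text \<open>The bounds from \<open>f\<^sub>1, f\<^sub>2 > 0\<close> hold for the extension \<open>g\<close> at \<open>+\<infinity>\<close> and, through the
  reflection, at \<open>-\<infinity>\<close>.\<close>

lemma geom_qp_A_op_extension_periodic:
  assumes \<epsilon>: "\<epsilon> > 0"
    and f\<^sub>1: "real_analytic_on f\<^sub>1 {-\<epsilon>..}" "\<forall>x\<ge>-\<epsilon>. f\<^sub>1 x > 0"
    and f\<^sub>2: "real_analytic_on f\<^sub>2 {-\<epsilon>..}" "\<forall>x\<ge>-\<epsilon>. f\<^sub>2 x > 0"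
    and "geom_qp (A_op f\<^sub>1)" and g: "real_analytic_on g UNIV"
    and g_A1: "\<And>x. x \<ge> -\<epsilon> \<Longrightarrow> g x = A_op f\<^sub>1 x" and g_A2: "\<And>x. x \<ge> -\<epsilon> \<Longrightarrow> g (c - x) = A_op f\<^sub>2 x"
  obtains \<tau> where "\<tau> > 0" "\<And>x. g (x + \<tau>) = g x"
proof -
  obtain m\<^sub>1 where "m\<^sub>1 > 0" and m\<^sub>1: "\<And>\<theta>. \<theta> \<ge> 1 \<Longrightarrow> A_op f\<^sub>1 \<theta> \<ge> m\<^sub>1 / sqrt \<theta>"
    using A_op_lower_bound_real_analytic[OF \<epsilon> f\<^sub>1] by blast
  obtain m\<^sub>2 where "m\<^sub>2 > 0" and m\<^sub>2: "\<And>\<theta>. \<theta> \<ge> 1 \<Longrightarrow> A_op f\<^sub>2 \<theta> \<ge> m\<^sub>2 / sqrt \<theta>"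
    using A_op_lower_bound_real_analytic[OF \<epsilon> f\<^sub>2] by blast
  have lower: "g \<theta> \<ge> m\<^sub>1 / sqrt \<theta>" "g (c - \<theta>) \<ge> m\<^sub>2 / sqrt \<theta>" if "\<theta> \<ge> 1" for \<theta>
    using m\<^sub>1[OF that] m\<^sub>2[OF that] g_A1[of \<theta>] g_A2[of \<theta>] that \<epsilon> by simp_all
  obtain \<tau> \<gamma> where \<tau>: "\<tau> > 0" and qp: "\<And>x. x > 0 \<Longrightarrow> A_op f\<^sub>1 (x + \<tau>) = \<gamma> * A_op f\<^sub>1 x"
    using \<open>geom_qp (A_op f\<^sub>1)\<close> unfolding geom_qp_def geom_qp_with_def by blast
  have qp_all: "g (x + \<tau>) = \<gamma> * g x" for x
  proof (rule real_analytic_on_eq_from_above[OF real_analytic_on_shift[OF g] real_analytic_on_cmult[OF g], where b = 1])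
    show "g (y + \<tau>) = \<gamma> * g y" if "1 \<le> y" for y
      using g_A1[of y] g_A1[of "y + \<tau>"] qp[of y] that \<tau> \<epsilon> by simp
  qed simp_all
  then have "g (x + \<tau>) = g x" for x
    using quasi_periodic_factor_eq_1[OF \<tau> qp_all \<open>m\<^sub>1 > 0\<close> lower(1) \<open>m\<^sub>2 > 0\<close> lower(2)] by simp
  with \<tau> that show ?thesis by blast
qed

theorem proposition5:
  fixes \<epsilon> x\<^sub>0 :: real and f\<^sub>1 f\<^sub>2 :: "real \<Rightarrow> real"
  assumes "\<epsilon> > 0"
    and "real_analytic_on f\<^sub>1 {-\<epsilon>..}" and "real_analytic_on f\<^sub>2 {-\<epsilon>..}"
    and "\<forall>x\<ge>-\<epsilon>. f\<^sub>1 x > 0" and "\<forall>x\<ge>-\<epsilon>. f\<^sub>2 x > 0"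
    and "geom_qp (A_op f\<^sub>1)"
    and "x\<^sub>0 > 0"
    and "\<exists>g\<^sub>1 g\<^sub>2. real_analytic_on g\<^sub>1 UNIV \<and> real_analytic_on g\<^sub>2 UNIV
          \<and> (\<forall>x\<ge>-\<epsilon>. g\<^sub>1 x = A_op f\<^sub>1 x) \<and> (\<forall>x\<ge>-\<epsilon>. g\<^sub>2 x = A_op f\<^sub>2 x)
          \<and> (\<forall>x. g\<^sub>2 x = g\<^sub>1 (x\<^sub>0 - x))"
  shows "(\<exists>c. \<forall>x\<ge>-\<epsilon>. f\<^sub>1 x = c) \<and> (\<exists>c. \<forall>x\<ge>-\<epsilon>. f\<^sub>2 x = c)
       \<and> (\<exists>c. \<forall>x\<ge>-\<epsilon>. A_op f\<^sub>1 x = c) \<and> (\<exists>c. \<forall>x\<ge>-\<epsilon>. A_op f\<^sub>2 x = c)"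
proof -
  obtain g g\<^sub>2 where g: "real_analytic_on g UNIV" and g_A1: "\<And>x. x \<ge> -\<epsilon> \<Longrightarrow> g x = A_op f\<^sub>1 x"
    and "\<And>x. x \<ge> -\<epsilon> \<Longrightarrow> g\<^sub>2 x = A_op f\<^sub>2 x" and "\<And>x. g\<^sub>2 x = g (x\<^sub>0 - x)"
    using assms(8) by blast
  then have g_A2: "\<And>x. x \<ge> -\<epsilon> \<Longrightarrow> g (x\<^sub>0 - x) = A_op f\<^sub>2 x" by simp
  obtain \<tau> where \<tau>: "\<tau> > 0" and per: "\<And>x. g (x + \<tau>) = g x"
    using geom_qp_A_op_extension_periodic[OF assms(1,2,4,3,5,6) g g_A1 g_A2] by blast
  have "abel_transform g X = abel_transform (A_op f\<^sub>1) X" if "X \<ge> 0" for X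
    using g_A1 assms(1) that by (intro abel_transform_cong) auto
  moreover have "mono_on {0..} (abel_transform (A_op f\<^sub>1))"
    using assms(1,2,4) by (intro abel_transform_A_op_mono real_analytic_on_atLeast_imp_continuous_on)
      (auto intro: less_imp_le)
  ultimately have "mono_on {0..} (abel_transform g)" by (simp add: mono_on_def)
  moreover have "continuous_on UNIV g" by (rule real_analytic_on_imp_continuous_on[OF g]) simp
  ultimately have g_const: "g x = g 0" for x by (intro periodic_const_if_abel_transform_mono[of \<tau> g, OF \<tau> _ per])
  have "A_op f\<^sub>1 x = g 0" "A_op f\<^sub>2 x = g 0" if "x \<ge> -\<epsilon>" for x
    using g_A1[OF that] g_A2[OF that] g_const[of x] g_const[of "x\<^sub>0 - x"] by simp_all
  then show ?thesis
    using real_analytic_eq_const_if_A_op_const[OF assms(1,2)] real_analytic_eq_const_if_A_op_const[OF assms(1,3)]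
    by blast
qed

end
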